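(* Let $\beta>0$ and $\alpha\in\mathbb{R}$ satisfy $|\alpha|<\beta$ and $|\alpha|+\beta=2$. For each even $N$ let $S=S_N\subset\{1,\dots,N\}$ with $|S|=N/2$, let $\sigma$ be distributed according to the block spin Ising Gibbs measure $\mu_{N,\alpha,\beta,S}$ described in the context, and let $m_1=\frac{2}{N}\sum_{i\in S}\sigma_i$, $m_2=\frac{2}{N}\sum_{i\notin S}\sigma_i$. Let $\rho$ be the probability measure on $\mathbb{R}$ with Lebesgue density $g(x)=\exp(-\tfrac{1}{12}x^4)/K$, where $K=\int_{\mathbb{R}}\exp(-\tfrac1{12}x^4)\,dx$. Then, as $N\to\infty$: \begin{enumerate} \item[(a)] If $\alpha>0$, then $\frac{\sqrt N}{2}(m_1-m_2)$ converges in distribution to a Gaussian with mean $0$ and variance $\frac{2}{2-(\beta-\alpha)}$. If $\alpha<0$, then $\frac{N^{1/4}}{2}(m_1-m_2)$ converges in distribution to $\rho$. \item[(b)] If $\alpha>0$, then $\frac{N^{1/4}}{2}(m_1+m_2)$ converges in distribution to $\rho$. If $\alpha<0$, then $\frac{\sqrt N}{2}(m_1+m_2)$ converges in distribution to a Gaussian with mean $0$ and variance $-\frac{1}{\alpha}$. \end{enumerate}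
   Context: Block spin Ising model: let $N$ be even and $S\subset\{1,\dots,N\}$ with $|S|=N/2$. For $i,j\in\{1,\dots,N\}$ write $i\sim j$ if $i,j\in S$ or $i,j\in S^c$, and $i\not\sim j$ otherwise. For parameters $\beta>0$, $|\alpha|\le\beta$, the Hamiltonian on $\{-1,+1\}^N$ is $$H_{N,\alpha,\beta,S}(\sigma)=-\frac{\beta}{2N}\sum_{i\sim j}\sigma_i\sigma_j-\frac{\alpha}{2N}\sum_{i\not\sim j}\sigma_i\sigma_j,$$ where the sums run over ordered pairs $(i,j)$, and the Gibbs measure is $\mu_{N,\alpha,\beta,S}(\sigma)=e^{-H_{N,\alpha,\beta,S}(\sigma)}/\sum_{\sigma'}e^{-H_{N,\alpha,\beta,S}(\sigma')}$. *)

theory Defs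
  imports "HOL-Probability.Probability"
begin

definition spin_configs :: "nat \<Rightarrow> (nat \<Rightarrow> real) set" where
  "spin_configs N = PiE {1..N} (\<lambda>_. {-1, 1})"

definition same_block :: "nat set \<Rightarrow> nat \<Rightarrow> nat \<Rightarrow> bool" where
  "same_block S i j \<longleftrightarrow> (i \<in> S \<longleftrightarrow> j \<in> S)"

definition block_hamiltonian ::
  "nat \<Rightarrow> real \<Rightarrow> real \<Rightarrow> nat set \<Rightarrow> (nat \<Rightarrow> real) \<Rightarrow> real" where
  "block_hamiltonian N \<alpha> \<beta> S \<sigma> =
     - (\<beta> / (2 * real N)) *
         (\<Sum>(i,j) \<in> {(i,j). i \<in> {1..N} \<and> j \<in> {1..N} \<and> same_block S i j}. \<sigma> i * \<sigma> j)
     - (\<alpha> / (2 * real N)) *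
         (\<Sum>(i,j) \<in> {(i,j). i \<in> {1..N} \<and> j \<in> {1..N} \<and> \<not> same_block S i j}. \<sigma> i * \<sigma> j)"

definition partition_fn :: "nat \<Rightarrow> real \<Rightarrow> real \<Rightarrow> nat set \<Rightarrow> real" where
  "partition_fn N \<alpha> \<beta> S = (\<Sum>\<sigma> \<in> spin_configs N. exp (- block_hamiltonian N \<alpha> \<beta> S \<sigma>))"

definition gibbs_pmf :: "nat \<Rightarrow> real \<Rightarrow> real \<Rightarrow> nat set \<Rightarrow> (nat \<Rightarrow> real) pmf" where
  "gibbs_pmf N \<alpha> \<beta> S = embed_pmf (\<lambda>\<sigma>. if \<sigma> \<in> spin_configs N
       then exp (- block_hamiltonian N \<alpha> \<beta> S \<sigma>) / partition_fn N \<alpha> \<beta> S else 0)"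

definition mag1 :: "nat \<Rightarrow> nat set \<Rightarrow> (nat \<Rightarrow> real) \<Rightarrow> real" where
  "mag1 N S \<sigma> = 2 / real N * (\<Sum>i \<in> S. \<sigma> i)"

definition mag2 :: "nat \<Rightarrow> nat set \<Rightarrow> (nat \<Rightarrow> real) \<Rightarrow> real" where
  "mag2 N S \<sigma> = 2 / real N * (\<Sum>i \<in> {1..N} - S. \<sigma> i)"

definition gibbs_law ::
  "nat \<Rightarrow> real \<Rightarrow> real \<Rightarrow> nat set \<Rightarrow> ((nat \<Rightarrow> real) \<Rightarrow> real) \<Rightarrow> real measure" where
  "gibbs_law N \<alpha> \<beta> S T = measure_pmf (map_pmf T (gibbs_pmf N \<alpha> \<beta> S))"

definition gaussian :: "real \<Rightarrow> real measure" where
  "gaussian v = density lborel (\<lambda>x. ennreal (normal_density 0 (sqrt v) x))"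

definition rho :: "real measure" where
  "rho = density lborel (\<lambda>x. ennreal (exp (- (x ^ 4) / 12) /
            (\<integral>y. exp (- (y ^ 4) / 12) \<partial>lborel)))"

end

theory Submission
  imports Defs "HOL-Real_Asymp.Real_Asymp"
begin

text \<open>
  Write \<open>N = 2n\<close>, let \<open>A\<close> and \<open>B\<close> be the spin sums over \<open>S\<close> and over its complement,
  \<open>s = sgn \<alpha>\<close>, \<open>P = A + s B\<close> and \<open>Q = A - s B\<close>. Because \<open>|\<alpha>| + \<beta> = 2\<close>, the Gibbs weight is
  \<open>exp ((P\<^sup>2 + \<kappa> Q\<^sup>2) / (2 N))\<close> with \<open>\<kappa> = (\<beta> - |\<alpha>|) / 2 \<in> (0, 1)\<close>, and under the uniform
  measure \<open>E exp (x P + y Q) = (cosh (x + y) cosh (x - y))\<^sup>n\<close>.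

  Hubbard-Stratonovich: perturbing \<open>P / N\<^bsup>3/4\<^esup>\<close> and \<open>Q / N\<^bsup>1/2\<^esup>\<close> by independent centred
  Gaussians of variances \<open>N\<^bsup>-1/2\<^esup>\<close> and \<open>1 / \<kappa>\<close> completes the square in the Gibbs weight,
  so the perturbed law has a Lebesgue density given explicitly by the moment generating function.
  Since \<open>ln cosh x = x\<^sup>2/2 - \<psi> x\<close> with \<open>\<psi> x \<sim> x\<^sup>4/12\<close>, this density converges, dominated
  thanks to the convexity and growth of \<open>\<psi>\<close>, to
  \<open>exp (- s\<^sup>4/12 - \<kappa> (1 - \<kappa>) v\<^sup>2/2)\<close>. Dividing the characteristic functions of the perturbed
  statistics by those of the noise and applying Levy's continuity theorem yields \<open>\<rho>\<close> for
  \<open>P / N\<^bsup>3/4\<^esup>\<close> and the centred Gaussian of variance \<open>1 / (1 - \<kappa>)\<close> for \<open>Q / N\<^bsup>1/2\<^esup>\<close>.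
\<close>

section \<open>The function \<open>\<psi> x = x\<^sup>2/2 - ln (cosh x)\<close>\<close>

definition psi :: "real \<Rightarrow> real" where
  "psi x = x^2/2 - ln (cosh x)"

lemma psi_minus [simp]: "psi (-x) = psi x"
  by (simp add: psi_def)

lemma psi_0 [simp]: "psi 0 = 0"
  by (simp add: psi_def)

lemma psi_abs: "psi \<bar>x\<bar> = psi x"
  by (cases "x \<ge> 0") auto

lemma cosh_eq_exp_psi: "cosh x = exp (x^2/2 - psi x)"
  by (simp add: psi_def)

lemma has_real_derivative_psi: "(psi has_real_derivative x - tanh x) (at x)"
  unfolding psi_def by (auto intro!: derivative_eq_intros simp: tanh_def)

lemma has_real_derivative_minus_tanh:
  fixes x :: real shows "((\<lambda>x. x - tanh x) has_real_derivative (tanh x)^2) (at x)"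
  by (auto intro!: derivative_eq_intros)

lemma convex_on_psi: "convex_on UNIV psi"
  by (rule f''_ge0_imp_convex[OF _ has_real_derivative_psi has_real_derivative_minus_tanh]) auto

lemma psi_midpoint_le: "2 * psi a \<le> psi (a + d) + psi (a - d)"
proof -
  have "psi ((1 - 1/2) *\<^sub>R (a + d) + (1/2) *\<^sub>R (a - d)) \<le> (1 - 1/2) * psi (a + d) + (1/2) * psi (a - d)"
    by (rule convex_onD[OF convex_on_psi]) auto
  moreover have "(1 - 1/2) *\<^sub>R (a + d) + (1/2) *\<^sub>R (a - d) = a" by (simp add: field_simps)
  ultimately show ?thesis by simp
qed

lemma tanh_le_self: fixes x :: real assumes "0 \<le> x" shows "tanh x \<le> x"
proof -
  have "0 - tanh 0 \<le> x - tanh x"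
  proof (rule DERIV_nonneg_imp_nondecreasing[OF assms])
    fix z :: real
    show "\<exists>d. ((\<lambda>x. x - tanh x) has_real_derivative d) (at z) \<and> 0 \<le> d"
      by (intro exI[of _ "(tanh z)^2"]) (simp add: has_real_derivative_minus_tanh)
  qed
  then show ?thesis by simp
qed

lemma psi_mono: assumes "0 \<le> x" "x \<le> y" shows "psi x \<le> psi y"
proof (rule DERIV_nonneg_imp_nondecreasing[OF assms(2)])
  fix z assume "x \<le> z" "z \<le> y"
  then have "0 \<le> z - tanh z" using assms tanh_le_self[of z] by auto
  then show "\<exists>d. (psi has_real_derivative d) (at z) \<and> 0 \<le> d" using has_real_derivative_psi by blast
qed

lemma tanh_ge_cubic: fixes x :: real assumes "0 \<le> x" shows "x - x^3/3 \<le> tanh x"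
proof -
  have "tanh 0 - 0 + 0^3/3 \<le> tanh x - x + x^3/3"
  proof (rule DERIV_nonneg_imp_nondecreasing[OF assms])
    fix z :: real assume "0 \<le> z" "z \<le> x"
    then have "(tanh z)^2 \<le> z^2" using tanh_le_self[of z] by (intro power_mono) auto
    moreover have "((\<lambda>y. tanh y - y + y^3/3) has_real_derivative z^2 - (tanh z)^2) (at z)"
      by (auto intro!: derivative_eq_intros simp: algebra_simps)
    ultimately show "\<exists>d. ((\<lambda>y. tanh y - y + y^3/3) has_real_derivative d) (at z) \<and> 0 \<le> d"
      by (intro exI[of _ "z^2 - (tanh z)^2"]) simp
  qed
  then show ?thesis by simp
qed

lemma tanh_ge_half: fixes x :: real assumes "0 \<le> x" "x \<le> 1" shows "x/2 \<le> tanh x"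
proof -
  have "x * x^2 \<le> x * 1" using assms by (intro mult_left_mono) (auto simp: power_le_one)
  then have "x^3 \<le> x" by (simp add: power3_eq_cube power2_eq_square)
  then show ?thesis using tanh_ge_cubic[OF assms(1)] assms by linarith
qed

lemma psi_ge_quartic: assumes "0 \<le> x" "x \<le> 1" shows "x^4/48 \<le> psi x"
proof -
  define h where "h y = y - tanh y - y^3/12" for y :: real
  have h_nonneg: "0 \<le> h y" if "0 \<le> y" "y \<le> 1" for y
  proof -
    have "h 0 \<le> h y"
    proof (rule DERIV_nonneg_imp_nondecreasing[OF that(1)])
      fix z assume z: "0 \<le> z" "z \<le> y"
      then have "(z/2)^2 \<le> (tanh z)^2" using tanh_ge_half[of z] that by (intro power_mono) auto
      moreover have "(h has_real_derivative (tanh z)^2 - z^2/4) (at z)"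
        unfolding h_def by (auto intro!: derivative_eq_intros simp: algebra_simps)
      ultimately show "\<exists>d. (h has_real_derivative d) (at z) \<and> 0 \<le> d"
        by (intro exI[of _ "(tanh z)^2 - z^2/4"]) (simp add: power_divide)
    qed
    then show ?thesis by (simp add: h_def)
  qed
  have "psi 0 - 0^4/48 \<le> psi x - x^4/48"
  proof (rule DERIV_nonneg_imp_nondecreasing[OF assms(1)])
    fix z assume "0 \<le> z" "z \<le> x"
    moreover have "((\<lambda>y. psi y - y^4/48) has_real_derivative h z) (at z)"
      unfolding h_def by (auto intro!: derivative_eq_intros has_real_derivative_psi)
    ultimately show "\<exists>d. ((\<lambda>y. psi y - y^4/48) has_real_derivative d) (at z) \<and> 0 \<le> d"
      using h_nonneg[of z] assms by auto
  qed
  then show ?thesis by simp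
qed

lemma ln_cosh_le_abs: fixes x :: real shows "ln (cosh x) \<le> \<bar>x\<bar>"
proof -
  have "cosh x = (exp \<bar>x\<bar> + exp (- \<bar>x\<bar>)) / 2"
    by (cases "x \<ge> 0") (auto simp: cosh_field_def)
  also have "\<dots> \<le> exp \<bar>x\<bar>" by simp
  finally show ?thesis
    by (metis cosh_real_pos ln_exp ln_le_cancel_iff exp_gt_zero)
qed

lemma psi_lower_bound: "min (x^4) (x^2) / 768 \<le> psi x"
proof -
  define y where "y = \<bar>x\<bar>"
  have y: "0 \<le> y" "x^4 = y^4" "x^2 = y^2" "psi x = psi y"
    by (auto simp: y_def power2_abs power_even_abs psi_abs)
  consider "y \<le> 1" | "1 < y" "y \<le> 4" | "4 < y" by linarith
  then have "min (y^4) (y^2) / 768 \<le> psi y"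
  proof cases
    case 1
    have "min (y^4) (y^2) \<le> y^4" "0 \<le> y^4" by simp_all
    then show ?thesis using psi_ge_quartic[of y] 1 y by linarith
  next
    case 2
    have "1/48 \<le> psi y"
      using psi_ge_quartic[of 1] psi_mono[of 1 y] 2 by simp
    moreover have "y^2 \<le> 4^2" using 2 y by (intro power_mono) auto
    ultimately show ?thesis by (simp add: min_def)
  next
    case 3
    have "y^2/768 \<le> y^2/2 - y"
      using 3 mult_left_mono[of 4 y y] by (simp add: power2_eq_square)
    also have "\<dots> \<le> psi y" using ln_cosh_le_abs[of y] y by (simp add: psi_def)
    finally show ?thesis by (simp add: min_def)
  qed
  then show ?thesis using y by simp
qed

lemma psi_over_power4_tendsto: "((\<lambda>x. psi x / x^4) \<longlongrightarrow> 1/12) (at 0)"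
  unfolding psi_def by (real_asymp simp: cosh_def)

lemma power4_mult_psi_tendsto: "((\<lambda>x. x^4 * psi (s / x + e / x^2)) \<longlongrightarrow> s^4/12) at_top"
proof -
  \<comment> \<open>The argument of \<open>psi\<close> may vanish, so use the continuous extension of \<open>psi y / y^4\<close>.\<close>
  define G where "G y = (if y = 0 then 1/12 else psi y / y^4)" for y
  have "(G \<longlongrightarrow> 1/12) (at 0)"
    using psi_over_power4_tendsto by (rule Lim_transform_eventually) (auto simp: G_def eventually_at_filter)
  then have G_cont: "isCont G 0" unfolding isCont_def by (simp add: G_def)
  have inv0: "((\<lambda>x::real. inverse x) \<longlongrightarrow> 0) at_top"
    by (rule tendsto_inverse_0_at_top[OF filterlim_ident])
  have "((\<lambda>x. s * inverse x + e * inverse x ^ 2) \<longlongrightarrow> s * 0 + e * 0 ^ 2) at_top"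
    by (intro tendsto_intros inv0)
  then have "((\<lambda>x. s / x + e / x^2) \<longlongrightarrow> 0) at_top"
    by (simp add: divide_inverse power_inverse)
  from isCont_tendsto_compose[OF G_cont this]
  have "((\<lambda>x. G (s / x + e / x^2)) \<longlongrightarrow> 1/12) at_top" by (simp add: G_def)
  moreover have "((\<lambda>x. (s + e * inverse x)^4) \<longlongrightarrow> (s + e * 0)^4) at_top"
    by (intro tendsto_intros inv0)
  ultimately have "((\<lambda>x. (s + e * inverse x)^4 * G (s / x + e / x^2)) \<longlongrightarrow> s^4 * (1/12)) at_top"
    using tendsto_mult by fastforce
  moreover have "eventually (\<lambda>x. (s + e * inverse x)^4 * G (s / x + e / x^2) = x^4 * psi (s / x + e / x^2)) at_top"
  proof (rule eventually_at_top_linorderI[of 1])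
    fix x :: real assume "1 \<le> x"
    then have "s + e * inverse x = x * (s / x + e / x^2)"
      by (simp add: field_simps power2_eq_square)
    moreover have "psi y = y^4 * G y" for y by (simp add: G_def)
    ultimately show "(s + e * inverse x)^4 * G (s / x + e / x^2) = x^4 * psi (s / x + e / x^2)"
      by (simp add: power_mult_distrib)
  qed
  ultimately show ?thesis by (simp add: tendsto_cong)
qed


section \<open>The smoothed density\<close>

definition qN :: "nat \<Rightarrow> real" where
  "qN n = real (2*n) powr (1/4)"

lemma qN_pos: "n \<ge> 1 \<Longrightarrow> 0 < qN n"
  by (simp add: qN_def)

lemma qN_ge_1: "n \<ge> 1 \<Longrightarrow> 1 \<le> qN n"
  unfolding qN_def by (rule ge_one_powr_ge_zero) auto

lemma qN_power: "0 < k \<Longrightarrow> qN n ^ k = real (2*n) powr (real k / 4)"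
  unfolding qN_def by (cases "n = 0") (simp_all add: powr_power)

lemma real_eq_qN_pow4: "real n = qN n ^ 4 / 2"
  using qN_power[of 4 n] by simp

lemma qN_at_top: "filterlim qN at_top sequentially"
  unfolding qN_def by real_asymp

lemma tendsto_exp_neg_sq_div_qN: "(\<lambda>n. exp (- ((1 / qN n * t)^2) / 2)) \<longlonglongrightarrow> 1"
proof -
  have "(\<lambda>n. exp (- ((inverse (qN n) * t)^2) / 2)) \<longlonglongrightarrow> exp (- ((0 * t)^2) / 2)"
    by (intro tendsto_intros tendsto_inverse_0_at_top[OF qN_at_top]) simp_all
  then show ?thesis by (simp add: inverse_eq_divide)
qed

lemma sqrt_scaling_eq_qN: "sqrt (real (2*n)) / 2 * x = real n * x / qN n ^ 2"
proof (cases "n = 0")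
  case False
  define q where "q = qN n"
  have q0: "0 < q" using qN_pos[of n] False by (simp add: q_def)
  have q2: "sqrt (real (2*n)) = q^2"
    unfolding q_def qN_power[of 2 n, simplified] by (simp add: powr_half_sqrt)
  have "sqrt (real (2*n)) / 2 * x = q^4/2 * x / q^2"
    unfolding q2 using q0 by (simp add: field_simps power4_eq_xxxx power2_eq_square)
  then show ?thesis unfolding q_def real_eq_qN_pow4[of n] .
qed simp

lemma root4_scaling_eq_qN: "real (2*n) powr (1/4) / 2 * x = real n * x / qN n ^ 3"
proof (cases "n = 0")
  case False
  define q where "q = qN n"
  have q0: "0 < q" using qN_pos[of n] False by (simp add: q_def)
  have "q / 2 * x = q^4/2 * x / q^3"
    using q0 by (simp add: field_simps power4_eq_xxxx power3_eq_cube)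
  then show ?thesis unfolding q_def real_eq_qN_pow4[of n] qN_def .
qed simp

lemma power2_le_power4_plus_1: fixes x :: real shows "x^2 \<le> x^4 + 1"
proof -
  have "0 \<le> (x^2 - 1)^2" by simp
  also have "\<dots> = x^4 - 2 * x^2 + 1" by (simp add: algebra_simps power2_eq_square power4_eq_xxxx)
  finally show ?thesis using zero_le_power2[of x] by linarith
qed

text \<open>Up to a constant factor, the Lebesgue density of \<open>(P / qN n ^ 3 + Z / qN n, Q / qN n ^ 2 + Z' / sqrt \<kappa>)\<close>
  for independent standard normal \<open>Z\<close>, \<open>Z'\<close> and \<open>(P, Q)\<close> weighted by \<open>hs_weight\<close>
  (see \<open>sum_hs_weight_mult_normal_densities\<close>).\<close>

definition smoothed_density :: "real \<Rightarrow> nat \<Rightarrow> real \<Rightarrow> real \<Rightarrow> real" where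
  "smoothed_density \<kappa> n s v = exp (- (s^2 * qN n ^ 2)/2 - \<kappa> * v^2/2) *
     (cosh (s / qN n + \<kappa> * v / qN n ^ 2) * cosh (s / qN n - \<kappa> * v / qN n ^ 2)) ^ n"

definition smoothed_density_limit :: "real \<Rightarrow> real \<Rightarrow> real \<Rightarrow> real" where
  "smoothed_density_limit \<kappa> s v = exp (- (s^4)/12 - \<kappa> * (1 - \<kappa>) * v^2 / 2)"

lemma smoothed_density_nonneg: "0 \<le> smoothed_density \<kappa> n s v"
  unfolding smoothed_density_def by (intro mult_nonneg_nonneg zero_le_power) auto

lemma smoothed_density_eq_psi:
  assumes n: "n \<ge> 1"
  shows "smoothed_density \<kappa> n s v = exp (- \<kappa> * (1 - \<kappa>) * v^2 / 2
          - real n * (psi (s / qN n + \<kappa> * v / qN n ^ 2) + psi (s / qN n - \<kappa> * v / qN n ^ 2)))"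
proof -
  define q where "q = qN n"
  have q: "0 < q" "real n = q^4/2" using qN_pos[OF n] real_eq_qN_pow4[of n] by (auto simp: q_def)
  define a where "a = s / q + \<kappa> * v / q^2"
  define b where "b = s / q - \<kappa> * v / q^2"
  have "(cosh a * cosh b) ^ n = exp (real n * ((a^2/2 - psi a) + (b^2/2 - psi b)))"
    unfolding cosh_eq_exp_psi by (simp add: exp_add[symmetric] exp_of_nat_mult[symmetric])
  then have "smoothed_density \<kappa> n s v
      = exp (- (s^2 * q^2)/2 - \<kappa> * v^2/2 + real n * ((a^2/2 - psi a) + (b^2/2 - psi b)))"
    unfolding smoothed_density_def q_def[symmetric] a_def[symmetric] b_def[symmetric] by (simp add: exp_add)
  also have "- (s^2 * q^2)/2 - \<kappa> * v^2/2 + real n * ((a^2/2 - psi a) + (b^2/2 - psi b))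
      = - \<kappa> * (1 - \<kappa>) * v^2 / 2 - real n * (psi a + psi b)"
  proof -
    have "real n * (a^2/2 + b^2/2) = (s^2 * q^2)/2 + \<kappa>^2 * v^2/2"
      unfolding a_def b_def q(2) using q(1) by (simp add: field_simps power2_eq_square power4_eq_xxxx)
    then show ?thesis by (simp add: algebra_simps power2_eq_square)
  qed
  finally show ?thesis by (simp add: a_def b_def q_def)
qed

lemma smoothed_density_le:
  assumes n: "n \<ge> 1"
  shows "smoothed_density \<kappa> n s v \<le> exp ((1 - s^2)/768) * exp (- \<kappa> * (1 - \<kappa>) * v^2 / 2)"
proof -
  define q where "q = qN n"
  have q: "0 < q" "real n = q^4/2" "1 \<le> q"
    using qN_pos[OF n] real_eq_qN_pow4[of n] qN_ge_1[OF n] by (auto simp: q_def)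
  define a where "a = s / q"
  define d where "d = \<kappa> * v / q^2"
  \<comment> \<open>Convexity of \<open>psi\<close> removes the dependence on \<open>v\<close>.\<close>
  have "real n * (2 * (min (a^4) (a^2) / 768)) \<le> real n * (psi (a + d) + psi (a - d))"
    using psi_midpoint_le[of a d] psi_lower_bound[of a] by (intro mult_left_mono) auto
  moreover have "s^2 - 1 \<le> real n * (2 * min (a^4) (a^2))"
  proof (cases "a^4 \<le> a^2")
    case True
    then have "real n * (2 * min (a^4) (a^2)) = s^4"
      unfolding a_def q(2) using q(1) by (simp add: field_simps power4_eq_xxxx)
    then show ?thesis using power2_le_power4_plus_1[of s] by simp
  next
    case False
    then have "real n * (2 * min (a^4) (a^2)) = s^2 * q^2"
      unfolding a_def q(2) using q(1) by (simp add: field_simps power2_eq_square power4_eq_xxxx)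
    moreover have "s^2 * 1 \<le> s^2 * q^2" using q by (intro mult_left_mono) (auto simp: one_le_power)
    ultimately show ?thesis by simp
  qed
  ultimately have "(s^2 - 1) / 768 \<le> real n * (psi (a + d) + psi (a - d))" by simp
  then have "smoothed_density \<kappa> n s v \<le> exp ((1 - s^2)/768 + (- \<kappa> * (1 - \<kappa>) * v^2 / 2))"
    unfolding smoothed_density_eq_psi[OF n] a_def d_def q_def by (intro exp_mono) (simp add: field_simps)
  then show ?thesis by (simp only: exp_add)
qed

lemma tendsto_smoothed_density: "(\<lambda>n. smoothed_density \<kappa> n s v) \<longlonglongrightarrow> smoothed_density_limit \<kappa> s v"
proof -
  have psi_lim: "(\<lambda>n. real n * psi (s / qN n + e / qN n ^ 2)) \<longlonglongrightarrow> s^4/24" for e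
  proof -
    have "(\<lambda>n. qN n ^ 4 * psi (s / qN n + e / qN n ^ 2) / 2) \<longlonglongrightarrow> s^4/12/2"
      using filterlim_compose[OF power4_mult_psi_tendsto qN_at_top] by (intro tendsto_divide) auto
    then show ?thesis unfolding real_eq_qN_pow4 by (simp add: mult_ac)
  qed
  have "(\<lambda>n. exp (- \<kappa> * (1 - \<kappa>) * v^2 / 2
          - (real n * psi (s / qN n + \<kappa> * v / qN n ^ 2) + real n * psi (s / qN n + (- \<kappa> * v) / qN n ^ 2))))
        \<longlonglongrightarrow> exp (- \<kappa> * (1 - \<kappa>) * v^2 / 2 - (s^4/24 + s^4/24))"
    by (intro tendsto_intros psi_lim)
  moreover have "\<forall>\<^sub>F n in sequentially. exp (- \<kappa> * (1 - \<kappa>) * v^2 / 2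
          - (real n * psi (s / qN n + \<kappa> * v / qN n ^ 2) + real n * psi (s / qN n + (- \<kappa> * v) / qN n ^ 2)))
          = smoothed_density \<kappa> n s v"
    using eventually_ge_at_top[of 1]
    by eventually_elim (simp add: smoothed_density_eq_psi distrib_left)
  moreover have "exp (- \<kappa> * (1 - \<kappa>) * v^2 / 2 - (s^4/24 + s^4/24)) = smoothed_density_limit \<kappa> s v"
    unfolding smoothed_density_limit_def by (simp add: field_simps)
  ultimately show ?thesis using Lim_transform_eventually by fastforce
qed

lemma borel_measurable_cosh [measurable]: "(cosh :: real \<Rightarrow> real) \<in> borel_measurable borel"
  by (intro borel_measurable_continuous_onI continuous_intros)

lemma measurable_smoothed_density [measurable]:
  "(\<lambda>(s, v). smoothed_density \<kappa> n s v) \<in> borel_measurable (lborel \<Otimes>\<^sub>M lborel)"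
  unfolding smoothed_density_def by measurable

lemma measurable_smoothed_density_limit [measurable]:
  "(\<lambda>(s, v). smoothed_density_limit \<kappa> s v) \<in> borel_measurable (lborel \<Otimes>\<^sub>M lborel)"
  unfolding smoothed_density_limit_def by measurable

lemma tendsto_iterated_integral_dominated:
  fixes F :: "nat \<Rightarrow> real \<Rightarrow> real \<Rightarrow> 'b::{banach, second_countable_topology}"
    and G :: "real \<Rightarrow> real \<Rightarrow> 'b" and Da Db :: "real \<Rightarrow> real"
  assumes [measurable]: "\<And>n. (\<lambda>(s, v). F n s v) \<in> borel_measurable (lborel \<Otimes>\<^sub>M lborel)"
      "(\<lambda>(s, v). G s v) \<in> borel_measurable (lborel \<Otimes>\<^sub>M lborel)"
    and Da: "integrable lborel Da" and Db: "integrable lborel Db"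
    and F_le: "\<And>n s v. norm (F n s v) \<le> Da s * Db v"
    and F_lim: "\<And>s v. (\<lambda>n. F n s v) \<longlonglongrightarrow> G s v"
  shows "(\<lambda>n. \<integral>s. (\<integral>v. F n s v \<partial>lborel) \<partial>lborel) \<longlonglongrightarrow> (\<integral>s. (\<integral>v. G s v \<partial>lborel) \<partial>lborel)"
proof -
  have [measurable]: "Da \<in> borel_measurable lborel" "Db \<in> borel_measurable lborel"
    using Da Db by (auto intro: borel_measurable_integrable)
  have [measurable]: "(\<lambda>v. F n s v) \<in> borel_measurable lborel" "(\<lambda>v. G s v) \<in> borel_measurable lborel" for n s
    by measurable
  have inner_lim: "(\<lambda>n. \<integral>v. F n s v \<partial>lborel) \<longlonglongrightarrow> (\<integral>v. G s v \<partial>lborel)" for s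
  proof (rule integral_dominated_convergence[where w="\<lambda>v. Da s * Db v"])
    show "integrable lborel (\<lambda>v. Da s * Db v)" using Db by simp
    show "AE v in lborel. (\<lambda>n. F n s v) \<longlonglongrightarrow> G s v" using F_lim by simp
    show "AE v in lborel. norm (F n s v) \<le> Da s * Db v" for n using F_le by simp
  qed measurable
  have inner_le: "norm (\<integral>v. F n s v \<partial>lborel) \<le> Da s * (\<integral>v. Db v \<partial>lborel)" for n s
  proof -
    have "integrable lborel (\<lambda>v. F n s v)"
    proof (rule Bochner_Integration.integrable_bound[where f="\<lambda>v. Da s * Db v"])
      show "integrable lborel (\<lambda>v. Da s * Db v)" using Db by simp
      show "AE v in lborel. norm (F n s v) \<le> norm (Da s * Db v)"
        using order_trans[OF F_le abs_ge_self] by simp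
    qed measurable
    then have "norm (\<integral>v. F n s v \<partial>lborel) \<le> (\<integral>v. Da s * Db v \<partial>lborel)"
      using Db F_le by (intro order_trans[OF integral_norm_bound] integral_mono integrable_norm) auto
    then show ?thesis by simp
  qed
  show ?thesis
  proof (rule integral_dominated_convergence[where w="\<lambda>s. Da s * (\<integral>v. Db v \<partial>lborel)"])
    show "integrable lborel (\<lambda>s. Da s * (\<integral>v. Db v \<partial>lborel))" using Da by simp
    show "AE s in lborel. (\<lambda>n. \<integral>v. F n s v \<partial>lborel) \<longlonglongrightarrow> (\<integral>v. G s v \<partial>lborel)"
      using inner_lim by simp
    show "AE s in lborel. norm (\<integral>v. F n s v \<partial>lborel) \<le> Da s * (\<integral>v. Db v \<partial>lborel)" for n
      using inner_le by simp
  qed measurable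
qed

section \<open>Gaussian integrals and the limit laws\<close>

lemma integral_std_normal_iexp:
  "(\<integral>x. std_normal_density x *\<^sub>R iexp (t * x) \<partial>lborel) = complex_of_real (exp (- (t^2) / 2))"
proof -
  have "char std_normal_distribution t = (\<integral>x. std_normal_density x *\<^sub>R iexp (t * x) \<partial>lborel)"
    unfolding char_def by (subst integral_density) (auto simp: normal_density_nonneg)
  then show ?thesis by (simp add: char_std_normal_distribution)
qed

lemma normal_density_shift_scale:
  "0 < \<sigma> \<Longrightarrow> normal_density m \<sigma> (m + \<sigma> * y) = std_normal_density y / \<sigma>"
  unfolding normal_density_def by (simp add: power_mult_distrib real_sqrt_mult field_simps)

lemma integral_normal_density_iexp:
  assumes "0 < \<sigma>"
  shows "(\<integral>x. normal_density m \<sigma> x *\<^sub>R iexp (t * x) \<partial>lborel)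
           = iexp (t * m) * complex_of_real (exp (- ((\<sigma> * t)^2) / 2))"
proof -
  have "(\<integral>x. normal_density m \<sigma> x *\<^sub>R iexp (t * x) \<partial>lborel)
        = \<bar>\<sigma>\<bar> *\<^sub>R (\<integral>y. normal_density m \<sigma> (m + \<sigma> * y) *\<^sub>R iexp (t * (m + \<sigma> * y)) \<partial>lborel)"
    using assms by (intro lborel_integral_real_affine) auto
  also have "(\<lambda>y. normal_density m \<sigma> (m + \<sigma> * y) *\<^sub>R iexp (t * (m + \<sigma> * y)))
       = (\<lambda>y. (iexp (t * m) / complex_of_real \<sigma>) * (std_normal_density y *\<^sub>R iexp ((\<sigma> * t) * y)))"
  proof
    fix y
    have "iexp (t * (m + \<sigma> * y)) = iexp (t * m) * iexp ((\<sigma> * t) * y)"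
      by (simp add: distrib_left exp_add[symmetric] algebra_simps)
    then show "normal_density m \<sigma> (m + \<sigma> * y) *\<^sub>R iexp (t * (m + \<sigma> * y))
       = (iexp (t * m) / complex_of_real \<sigma>) * (std_normal_density y *\<^sub>R iexp ((\<sigma> * t) * y))"
      using assms by (simp add: normal_density_shift_scale scaleR_conv_of_real field_simps)
  qed
  also have "\<bar>\<sigma>\<bar> *\<^sub>R (\<integral>y. (iexp (t * m) / complex_of_real \<sigma>) * (std_normal_density y *\<^sub>R iexp ((\<sigma> * t) * y)) \<partial>lborel)
      = iexp (t * m) * complex_of_real (exp (- ((\<sigma> * t)^2) / 2))"
    using assms by (simp only: integral_mult_right_zero integral_std_normal_iexp) (simp add: scaleR_conv_of_real)
  finally show ?thesis .
qed

lemma integral_normal_density_one: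
  "0 < \<sigma> \<Longrightarrow> (\<integral>x. normal_density m \<sigma> x *\<^sub>R (1::complex) \<partial>lborel) = 1"
  using integral_normal_density_iexp[of \<sigma> m 0] by simp

lemma integrable_normal_density_scaleR:
  fixes b :: "real \<Rightarrow> complex"
  assumes "0 < \<sigma>" and [measurable]: "b \<in> borel_measurable lborel" and b_le: "\<And>x. norm (b x) \<le> 1"
  shows "integrable lborel (\<lambda>x. normal_density m \<sigma> x *\<^sub>R b x)"
proof (rule Bochner_Integration.integrable_bound)
  show "AE x in lborel. norm (normal_density m \<sigma> x *\<^sub>R b x) \<le> norm (normal_density m \<sigma> x)"
    using b_le by (auto intro!: mult_left_le)
qed (use \<open>0 < \<sigma>\<close> in auto)

lemma exp_neg_sq_eq_normal_density:
  "0 < c \<Longrightarrow> exp (- (x^2) / (2 * c)) = sqrt (2 * pi * c) * normal_density 0 (sqrt c) x"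
  unfolding normal_density_def by (simp add: real_sqrt_mult)

lemma integrable_exp_neg_sq: "0 < c \<Longrightarrow> integrable lborel (\<lambda>x::real. exp (- (x^2) / (2 * c)))"
  by (subst exp_neg_sq_eq_normal_density) auto

definition quartic_weight :: "real \<Rightarrow> real" where
  "quartic_weight s = exp (- (s^4) / 12)"

lemma measurable_quartic_weight [measurable]: "quartic_weight \<in> borel_measurable borel"
  unfolding quartic_weight_def by measurable

lemma integrable_quartic_weight: "integrable lborel quartic_weight"
proof (rule Bochner_Integration.integrable_bound)
  show "integrable lborel (\<lambda>s::real. exp (1/12) * exp (- (s^2) / (2 * 6)))"
    by (intro integrable_mult_right integrable_exp_neg_sq) simp
  have "quartic_weight s \<le> exp (1/12) * exp (- (s^2) / (2 * 6))" for s
    using power2_le_power4_plus_1[of s] by (simp add: quartic_weight_def exp_add[symmetric])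
  then show "AE s in lborel. norm (quartic_weight s) \<le> norm (exp (1/12) * exp (- (s^2) / (2 * 6)))"
    by (simp add: quartic_weight_def)
qed simp

lemma integral_quartic_weight_pos: "0 < (\<integral>s. quartic_weight s \<partial>lborel)"
proof -
  have nonneg: "AE s in lborel. 0 \<le> quartic_weight s" by (simp add: quartic_weight_def)
  have "(\<integral>s. quartic_weight s \<partial>lborel) \<noteq> 0"
  proof
    assume "(\<integral>s. quartic_weight s \<partial>lborel) = 0"
    then have "AE s in lborel. quartic_weight s = 0"
      using integral_nonneg_eq_0_iff_AE[OF integrable_quartic_weight nonneg] by simp
    then have "ae_filter (lborel :: real measure) = bot"
      by (simp add: quartic_weight_def trivial_limit_def)
    then show False by (simp add: ae_filter_eq_bot_iff)
  qed
  then show ?thesis using integral_nonneg_AE[OF nonneg] by simp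
qed

lemma integral_quartic_weight_scaleR_one:
  "(\<integral>s. quartic_weight s *\<^sub>R (1::complex) \<partial>lborel) = complex_of_real (\<integral>s. quartic_weight s \<partial>lborel)"
  by (subst integral_scaleR_left) (auto simp: integrable_quartic_weight scaleR_conv_of_real)

lemma integral_smoothed_density_limit:
  fixes a b :: "real \<Rightarrow> complex"
  assumes "0 < \<kappa>" "\<kappa> < 1"
  shows "(\<integral>s. (\<integral>v. a s * b v * complex_of_real (smoothed_density_limit \<kappa> s v) \<partial>lborel) \<partial>lborel)
    = (\<integral>s. quartic_weight s *\<^sub>R a s \<partial>lborel) * (sqrt (2 * pi / (\<kappa> * (1 - \<kappa>))) *\<^sub>R
          (\<integral>v. normal_density 0 (sqrt (1 / (\<kappa> * (1 - \<kappa>)))) v *\<^sub>R b v \<partial>lborel))"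
proof -
  define w where "w = 1 / (\<kappa> * (1 - \<kappa>))"
  have w: "0 < w" using assms by (simp add: w_def)
  define nd where "nd v = normal_density 0 (sqrt w) v" for v
  have "smoothed_density_limit \<kappa> s v = quartic_weight s * exp (- (v^2) / (2 * w))" for s v
    unfolding smoothed_density_limit_def quartic_weight_def w_def using assms
    by (simp add: exp_add[symmetric] field_simps)
  then have "a s * b v * complex_of_real (smoothed_density_limit \<kappa> s v)
      = (quartic_weight s *\<^sub>R a s) * (sqrt (2 * pi * w) *\<^sub>R (nd v *\<^sub>R b v))" for s v
    unfolding exp_neg_sq_eq_normal_density[OF w] nd_def by (simp add: scaleR_conv_of_real mult_ac)
  then have "(\<integral>s. (\<integral>v. a s * b v * complex_of_real (smoothed_density_limit \<kappa> s v) \<partial>lborel) \<partial>lborel)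
      = (\<integral>s. (quartic_weight s *\<^sub>R a s) * (\<integral>v. sqrt (2 * pi * w) *\<^sub>R (nd v *\<^sub>R b v) \<partial>lborel) \<partial>lborel)"
    by (simp only: integral_mult_right_zero)
  also have "\<dots> = (\<integral>s. quartic_weight s *\<^sub>R a s \<partial>lborel) * (sqrt (2 * pi * w) *\<^sub>R (\<integral>v. nd v *\<^sub>R b v \<partial>lborel))"
    by (simp only: integral_mult_left_zero integral_scaleR_right)
  finally show ?thesis unfolding nd_def w_def by simp
qed

lemma weak_conv_m_map_pmf_if_char_tendsto:
  fixes G :: "nat \<Rightarrow> 'a pmf" and T :: "nat \<Rightarrow> 'a \<Rightarrow> real"
  assumes M: "real_distribution M"
    and char_lim: "\<And>t. (\<lambda>n. \<integral>\<sigma>. iexp (t * T n \<sigma>) \<partial>measure_pmf (G n)) \<longlonglongrightarrow> char M t"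
  shows "weak_conv_m (\<lambda>n. measure_pmf (map_pmf (T n) (G n))) M"
proof -
  have "real_distribution (distr (measure_pmf (G n)) borel (T n))" for n
    unfolding real_distribution_def real_distribution_axioms_def
    by (auto intro: measure_pmf.prob_space_distr)
  moreover have "char (distr (measure_pmf (G n)) borel (T n)) t = (\<integral>\<sigma>. iexp (t * T n \<sigma>) \<partial>measure_pmf (G n))"
    for n t unfolding char_def by (subst integral_distr) auto
  ultimately have "weak_conv_m (\<lambda>n. distr (measure_pmf (G n)) borel (T n)) M"
    using char_lim by (intro levy_continuity M) auto
  moreover have "cdf (measure_pmf (map_pmf (T n) (G n))) = cdf (distr (measure_pmf (G n)) borel (T n))" for n
    unfolding cdf_def by (simp add: measure_distr)
  ultimately show ?thesis unfolding weak_conv_m_def by simp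
qed

lemma real_distribution_gaussian: "0 < v \<Longrightarrow> real_distribution (gaussian v)"
  unfolding gaussian_def real_distribution_def real_distribution_axioms_def
  using prob_space_normal_density[of "sqrt v" 0] by simp

lemma char_gaussian:
  assumes "0 < v" shows "char (gaussian v) t = complex_of_real (exp (- (v * t^2) / 2))"
proof -
  have "char (gaussian v) t = (\<integral>x. normal_density 0 (sqrt v) x *\<^sub>R iexp (t * x) \<partial>lborel)"
    unfolding char_def gaussian_def by (subst integral_density) auto
  also have "\<dots> = iexp (t * 0) * complex_of_real (exp (- ((sqrt v * t)^2) / 2))"
    by (rule integral_normal_density_iexp) (use assms in simp)
  also have "\<dots> = complex_of_real (exp (- (v * t^2) / 2))"
    using assms by (simp add: power_mult_distrib)
  finally show ?thesis .
qed

lemma rho_eq_density_quartic_weight: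
  "rho = density lborel (\<lambda>x. ennreal (quartic_weight x / (\<integral>y. quartic_weight y \<partial>lborel)))"
  unfolding rho_def quartic_weight_def ..

lemma real_distribution_rho: "real_distribution rho"
proof -
  define Z where "Z = (\<integral>y. quartic_weight y \<partial>lborel)"
  have Z: "0 < Z" unfolding Z_def by (rule integral_quartic_weight_pos)
  have "emeasure (density lborel (\<lambda>x. ennreal (quartic_weight x / Z))) UNIV
      = ennreal (\<integral>x. quartic_weight x / Z \<partial>lborel)"
  proof -
    have "emeasure (density lborel (\<lambda>x. ennreal (quartic_weight x / Z))) UNIV
        = (\<integral>\<^sup>+x. ennreal (quartic_weight x / Z) \<partial>lborel)"
      by (subst emeasure_density) auto
    also have "\<dots> = ennreal (\<integral>x. quartic_weight x / Z \<partial>lborel)"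
      by (intro nn_integral_eq_integral integrable_divide integrable_quartic_weight)
         (use Z in \<open>auto simp: quartic_weight_def\<close>)
    finally show ?thesis .
  qed
  also have "(\<integral>x. quartic_weight x / Z \<partial>lborel) = 1" using Z by (simp add: Z_def)
  finally have "prob_space (density lborel (\<lambda>x. ennreal (quartic_weight x / Z)))"
    by (intro prob_spaceI) simp
  then show ?thesis
    unfolding rho_eq_density_quartic_weight Z_def[symmetric] real_distribution_def real_distribution_axioms_def
    by simp
qed

lemma char_rho:
  "char rho t = (\<integral>s. quartic_weight s *\<^sub>R iexp (t * s) \<partial>lborel) / complex_of_real (\<integral>s. quartic_weight s \<partial>lborel)"
proof -
  define Z where "Z = (\<integral>y. quartic_weight y \<partial>lborel)"
  have Z: "0 < Z" unfolding Z_def by (rule integral_quartic_weight_pos)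
  have "char rho t = (\<integral>x. (1 / Z) *\<^sub>R (quartic_weight x *\<^sub>R iexp (t * x)) \<partial>lborel)"
    unfolding char_def rho_eq_density_quartic_weight Z_def[symmetric] using Z
    by (subst integral_density) (auto simp: quartic_weight_def)
  also have "\<dots> = (\<integral>s. quartic_weight s *\<^sub>R iexp (t * s) \<partial>lborel) / complex_of_real Z"
    by (simp add: scaleR_conv_of_real field_simps del: integral_mult_right_zero)
  finally show ?thesis unfolding Z_def .
qed

section \<open>The Hubbard-Stratonovich transform\<close>

definition hs_weight :: "real \<Rightarrow> nat \<Rightarrow> real \<Rightarrow> real \<Rightarrow> real" where
  "hs_weight \<kappa> n p r = exp ((p^2 + \<kappa> * r^2) / (4 * real n))"

lemma hs_weight_mult_normal_densities:
  assumes n: "n \<ge> 1" and \<kappa>: "0 < \<kappa>"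
  shows "hs_weight \<kappa> n p r * normal_density (p / qN n ^ 3) (1 / qN n) s
           * normal_density (r / qN n ^ 2) (1 / sqrt \<kappa>) v
     = qN n * sqrt \<kappa> / (2 * pi) * exp (- (s^2 * qN n ^ 2)/2 - \<kappa> * v^2/2)
         * exp ((s / qN n) * p + (\<kappa> * v / qN n ^ 2) * r)"
proof -
  define q where "q = qN n"
  have q: "0 < q" "real n = q^4/2" using qN_pos[OF n] real_eq_qN_pow4[of n] by (auto simp: q_def)
  define c1 where "c1 = 1 / sqrt (2 * pi * (1 / q)^2)"
  define c2 where "c2 = 1 / sqrt (2 * pi * (1 / sqrt \<kappa>)^2)"
  have "c1 * c2 = q * sqrt \<kappa> / (sqrt (2 * pi) * sqrt (2 * pi))"
    unfolding c1_def c2_def using q(1) \<kappa> by (simp add: real_sqrt_mult real_sqrt_divide power_divide)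
  then have c: "c1 * c2 = q * sqrt \<kappa> / (2 * pi)" by simp
  have "hs_weight \<kappa> n p r * normal_density (p / q ^ 3) (1 / q) s * normal_density (r / q ^ 2) (1 / sqrt \<kappa>) v
     = c1 * c2 * exp ((p^2 + \<kappa> * r^2) / (4 * real n) + (- ((s - p / q^3)^2) / (2 * (1/q)^2))
                           + (- ((v - r / q^2)^2) / (2 * (1 / sqrt \<kappa>)^2)))"
    unfolding hs_weight_def normal_density_def c1_def[symmetric] c2_def[symmetric] exp_add by (simp add: mult_ac)
  \<comment> \<open>Completing the square: the terms in \<open>p\<^sup>2\<close> and \<open>r\<^sup>2\<close> cancel.\<close>
  also have "(p^2 + \<kappa> * r^2) / (4 * real n) + (- ((s - p / q^3)^2) / (2 * (1/q)^2))
                           + (- ((v - r / q^2)^2) / (2 * (1 / sqrt \<kappa>)^2))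
      = (- (s^2 * q^2)/2 - \<kappa> * v^2/2) + ((s / q) * p + (\<kappa> * v / q^2) * r)"
    unfolding q(2) using q(1) \<kappa>
    by (simp add: power_divide field_simps power2_eq_square power3_eq_cube power4_eq_xxxx)
  finally show ?thesis unfolding q_def c exp_add by (simp add: mult_ac)
qed

lemma sum_hs_weight_mult_normal_densities:
  assumes n: "n \<ge> 1" and \<kappa>: "0 < \<kappa>"
    and mgf: "\<And>x y. (\<Sum>\<sigma>\<in>\<Omega>. exp (x * P \<sigma> + y * Q \<sigma>)) = K * (cosh (x + y) * cosh (x - y)) ^ n"
  shows "(\<Sum>\<sigma>\<in>\<Omega>. hs_weight \<kappa> n (P \<sigma>) (Q \<sigma>) * normal_density (P \<sigma> / qN n ^ 3) (1 / qN n) s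
                     * normal_density (Q \<sigma> / qN n ^ 2) (1 / sqrt \<kappa>) v)
      = qN n * sqrt \<kappa> / (2 * pi) * K * smoothed_density \<kappa> n s v"
proof -
  have "(\<Sum>\<sigma>\<in>\<Omega>. hs_weight \<kappa> n (P \<sigma>) (Q \<sigma>) * normal_density (P \<sigma> / qN n ^ 3) (1 / qN n) s
                     * normal_density (Q \<sigma> / qN n ^ 2) (1 / sqrt \<kappa>) v)
     = qN n * sqrt \<kappa> / (2 * pi) * exp (- (s^2 * qN n ^ 2)/2 - \<kappa> * v^2/2)
           * (\<Sum>\<sigma>\<in>\<Omega>. exp ((s / qN n) * P \<sigma> + (\<kappa> * v / qN n ^ 2) * Q \<sigma>))"
    by (simp only: hs_weight_mult_normal_densities[OF n \<kappa>] sum_distrib_left)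
  then show ?thesis unfolding mgf smoothed_density_def by (simp add: mult_ac)
qed

lemma mgf_constant_pos:
  fixes K :: real
  assumes "finite \<Omega>" "\<Omega> \<noteq> {}"
    and "\<And>x y. (\<Sum>\<sigma>\<in>\<Omega>. exp (x * P \<sigma> + y * Q \<sigma>)) = K * (cosh (x + y) * cosh (x - y)) ^ n"
  shows "0 < K"
proof -
  have "real (card \<Omega>) = K" using assms(3)[of 0 0] by simp
  moreover have "0 < card \<Omega>" using assms(1,2) by (simp add: card_gt_0_iff)
  ultimately show ?thesis by simp
qed

lemma integral_normal_mixture_product:
  fixes a b :: "real \<Rightarrow> complex" and w m1 m2 :: "'a \<Rightarrow> real"
  assumes fin: "finite \<Omega>" and \<sigma>: "0 < \<sigma>1" "0 < \<sigma>2"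
    and [measurable]: "a \<in> borel_measurable lborel" "b \<in> borel_measurable lborel"
    and a_le: "\<And>x. norm (a x) \<le> 1" and b_le: "\<And>x. norm (b x) \<le> 1"
  shows "(\<integral>s. (\<integral>v. a s * b v * complex_of_real
            (\<Sum>\<sigma>\<in>\<Omega>. w \<sigma> * normal_density (m1 \<sigma>) \<sigma>1 s * normal_density (m2 \<sigma>) \<sigma>2 v) \<partial>lborel) \<partial>lborel)
         = (\<Sum>\<sigma>\<in>\<Omega>. complex_of_real (w \<sigma>) * (\<integral>s. normal_density (m1 \<sigma>) \<sigma>1 s *\<^sub>R a s \<partial>lborel)
                              * (\<integral>v. normal_density (m2 \<sigma>) \<sigma>2 v *\<^sub>R b v \<partial>lborel))"
proof -
  define A where "A \<sigma> s = complex_of_real (w \<sigma>) * (normal_density (m1 \<sigma>) \<sigma>1 s *\<^sub>R a s)" for \<sigma> s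
  define B where "B \<sigma> = (\<integral>v. normal_density (m2 \<sigma>) \<sigma>2 v *\<^sub>R b v \<partial>lborel)" for \<sigma>
  have inner: "(\<integral>v. a s * b v * complex_of_real
            (\<Sum>\<sigma>\<in>\<Omega>. w \<sigma> * normal_density (m1 \<sigma>) \<sigma>1 s * normal_density (m2 \<sigma>) \<sigma>2 v) \<partial>lborel)
       = (\<Sum>\<sigma>\<in>\<Omega>. A \<sigma> s * B \<sigma>)" for s
  proof -
    have "(\<integral>v. a s * b v * complex_of_real
            (\<Sum>\<sigma>\<in>\<Omega>. w \<sigma> * normal_density (m1 \<sigma>) \<sigma>1 s * normal_density (m2 \<sigma>) \<sigma>2 v) \<partial>lborel)
        = (\<integral>v. (\<Sum>\<sigma>\<in>\<Omega>. A \<sigma> s * (normal_density (m2 \<sigma>) \<sigma>2 v *\<^sub>R b v)) \<partial>lborel)"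
      by (auto simp: sum_distrib_left scaleR_conv_of_real mult_ac A_def intro!: Bochner_Integration.integral_cong)
    also have "\<dots> = (\<Sum>\<sigma>\<in>\<Omega>. (\<integral>v. A \<sigma> s * (normal_density (m2 \<sigma>) \<sigma>2 v *\<^sub>R b v) \<partial>lborel))"
      using \<sigma>(2) b_le by (intro Bochner_Integration.integral_sum integrable_mult_right integrable_normal_density_scaleR) auto
    finally show ?thesis unfolding B_def by (simp only: integral_mult_right_zero)
  qed
  have "(\<integral>s. (\<Sum>\<sigma>\<in>\<Omega>. A \<sigma> s * B \<sigma>) \<partial>lborel) = (\<Sum>\<sigma>\<in>\<Omega>. (\<integral>s. A \<sigma> s * B \<sigma> \<partial>lborel))"
    unfolding A_def using \<sigma>(1) a_le
    by (intro Bochner_Integration.integral_sum integrable_mult_left integrable_mult_right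
        integrable_normal_density_scaleR) auto
  then show ?thesis
    unfolding inner A_def B_def by (simp only: integral_mult_left_zero integral_mult_right_zero)
qed

definition smoothed_integral :: "real \<Rightarrow> nat \<Rightarrow> (real \<Rightarrow> complex) \<Rightarrow> (real \<Rightarrow> complex) \<Rightarrow> complex" where
  "smoothed_integral \<kappa> n a b =
     (\<integral>s. (\<integral>v. a s * b v * complex_of_real (smoothed_density \<kappa> n s v) \<partial>lborel) \<partial>lborel)"

lemma smoothed_integral_eq_sum:
  fixes a b :: "real \<Rightarrow> complex"
  assumes n: "n \<ge> 1" and \<kappa>: "0 < \<kappa>" and fin: "finite \<Omega>" and K: "0 < K"
    and mgf: "\<And>x y. (\<Sum>\<sigma>\<in>\<Omega>. exp (x * P \<sigma> + y * Q \<sigma>)) = K * (cosh (x + y) * cosh (x - y)) ^ n"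
    and [measurable]: "a \<in> borel_measurable lborel" "b \<in> borel_measurable lborel"
    and a_le: "\<And>x. norm (a x) \<le> 1" and b_le: "\<And>x. norm (b x) \<le> 1"
  shows "smoothed_integral \<kappa> n a b
     = complex_of_real (2 * pi / (qN n * sqrt \<kappa> * K)) *
       (\<Sum>\<sigma>\<in>\<Omega>. complex_of_real (hs_weight \<kappa> n (P \<sigma>) (Q \<sigma>))
              * (\<integral>s. normal_density (P \<sigma> / qN n ^ 3) (1 / qN n) s *\<^sub>R a s \<partial>lborel)
              * (\<integral>v. normal_density (Q \<sigma> / qN n ^ 2) (1 / sqrt \<kappa>) v *\<^sub>R b v \<partial>lborel))"
proof -
  define C where "C = 2 * pi / (qN n * sqrt \<kappa> * K)"
  define mix where "mix s v = (\<Sum>\<sigma>\<in>\<Omega>. hs_weight \<kappa> n (P \<sigma>) (Q \<sigma>) * normal_density (P \<sigma> / qN n ^ 3) (1 / qN n) s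
                     * normal_density (Q \<sigma> / qN n ^ 2) (1 / sqrt \<kappa>) v)" for s v
  have "smoothed_density \<kappa> n s v = C * mix s v" for s v
    unfolding mix_def sum_hs_weight_mult_normal_densities[OF n \<kappa> mgf] C_def
    using qN_pos[OF n] \<kappa> K by simp
  then have "smoothed_integral \<kappa> n a b
      = complex_of_real C * (\<integral>s. (\<integral>v. a s * b v * complex_of_real (mix s v) \<partial>lborel) \<partial>lborel)"
    unfolding smoothed_integral_def
    by (simp only: integral_mult_right_zero of_real_mult mult.left_commute[of _ "complex_of_real C"])
  also have "(\<integral>s. (\<integral>v. a s * b v * complex_of_real (mix s v) \<partial>lborel) \<partial>lborel)
     = (\<Sum>\<sigma>\<in>\<Omega>. complex_of_real (hs_weight \<kappa> n (P \<sigma>) (Q \<sigma>))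
              * (\<integral>s. normal_density (P \<sigma> / qN n ^ 3) (1 / qN n) s *\<^sub>R a s \<partial>lborel)
              * (\<integral>v. normal_density (Q \<sigma> / qN n ^ 2) (1 / sqrt \<kappa>) v *\<^sub>R b v \<partial>lborel))"
    unfolding mix_def using qN_pos[OF n] \<kappa> a_le b_le
    by (intro integral_normal_mixture_product fin) auto
  finally show ?thesis unfolding C_def .
qed

lemma tendsto_smoothed_integral:
  fixes a b :: "real \<Rightarrow> complex"
  assumes \<kappa>: "0 < \<kappa>" "\<kappa> < 1"
    and [measurable]: "a \<in> borel_measurable lborel" "b \<in> borel_measurable lborel"
    and a_le: "\<And>x. norm (a x) \<le> 1" and b_le: "\<And>x. norm (b x) \<le> 1"
  shows "(\<lambda>n. smoothed_integral \<kappa> n a b) \<longlonglongrightarrow> (\<integral>s. quartic_weight s *\<^sub>R a s \<partial>lborel)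
           * (sqrt (2 * pi / (\<kappa> * (1 - \<kappa>))) *\<^sub>R
              (\<integral>v. normal_density 0 (sqrt (1 / (\<kappa> * (1 - \<kappa>)))) v *\<^sub>R b v \<partial>lborel))"
  unfolding smoothed_integral_def integral_smoothed_density_limit[OF \<kappa>, symmetric]
proof (rule LIMSEQ_imp_Suc, rule tendsto_iterated_integral_dominated
    [where Da="\<lambda>s. exp ((1 - s^2)/768)" and Db="\<lambda>v. exp (- \<kappa> * (1 - \<kappa>) * v^2 / 2)"])
  have "integrable lborel (\<lambda>s::real. exp (1/768) * exp (- (s^2) / (2 * 384)))"
    by (intro integrable_mult_right integrable_exp_neg_sq) simp
  then show "integrable lborel (\<lambda>s::real. exp ((1 - s^2)/768))"
    by (simp add: exp_add[symmetric] diff_divide_distrib)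
  have "integrable lborel (\<lambda>v::real. exp (- (v^2) / (2 * (1 / (\<kappa> * (1 - \<kappa>))))))"
    using \<kappa> by (intro integrable_exp_neg_sq) simp
  then show "integrable lborel (\<lambda>v::real. exp (- \<kappa> * (1 - \<kappa>) * v^2 / 2))"
    by (simp add: field_simps)
  show "norm (a s * b v * complex_of_real (smoothed_density \<kappa> (Suc n) s v))
      \<le> exp ((1 - s^2)/768) * exp (- \<kappa> * (1 - \<kappa>) * v^2 / 2)" for n s v
  proof -
    have "norm (a s * b v * complex_of_real (smoothed_density \<kappa> (Suc n) s v))
        \<le> 1 * 1 * smoothed_density \<kappa> (Suc n) s v"
      unfolding norm_mult using a_le[of s] b_le[of v] smoothed_density_nonneg[of \<kappa> "Suc n" s v]
      by (intro mult_mono) auto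
    then show ?thesis using smoothed_density_le[of "Suc n" \<kappa> s v] by simp
  qed
  show "(\<lambda>n. a s * b v * complex_of_real (smoothed_density \<kappa> (Suc n) s v))
      \<longlonglongrightarrow> a s * b v * complex_of_real (smoothed_density_limit \<kappa> s v)" for s v
    using LIMSEQ_Suc[OF tendsto_smoothed_density] by (intro tendsto_intros)
  show "(\<lambda>(s, v). a s * b v * complex_of_real (smoothed_density \<kappa> (Suc n) s v))
      \<in> borel_measurable (lborel \<Otimes>\<^sub>M lborel)" for n
    by measurable
  show "(\<lambda>(s, v). a s * b v * complex_of_real (smoothed_density_limit \<kappa> s v))
      \<in> borel_measurable (lborel \<Otimes>\<^sub>M lborel)"
    by measurable
qed

definition hs_expectation ::
  "real \<Rightarrow> nat \<Rightarrow> 'a set \<Rightarrow> ('a \<Rightarrow> real) \<Rightarrow> ('a \<Rightarrow> real) \<Rightarrow> ('a \<Rightarrow> complex) \<Rightarrow> complex" where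
  "hs_expectation \<kappa> n \<Omega> P Q f =
     (\<Sum>\<sigma>\<in>\<Omega>. complex_of_real (hs_weight \<kappa> n (P \<sigma>) (Q \<sigma>) / (\<Sum>\<tau>\<in>\<Omega>. hs_weight \<kappa> n (P \<tau>) (Q \<tau>))) * f \<sigma>)"

lemma hs_expectation_mult_right:
  "hs_expectation \<kappa> n \<Omega> P Q (\<lambda>\<sigma>. f \<sigma> * c) = hs_expectation \<kappa> n \<Omega> P Q f * c"
  by (simp only: hs_expectation_def sum_distrib_right mult.assoc)

lemma hs_expectation_eq_smoothed_integral_ratio:
  fixes P Q :: "'a \<Rightarrow> real" and a b :: "real \<Rightarrow> complex"
  assumes n: "n \<ge> 1" and \<kappa>: "0 < \<kappa>" and fin: "finite \<Omega>" and ne: "\<Omega> \<noteq> {}"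
    and mgf: "\<And>x y. (\<Sum>\<sigma>\<in>\<Omega>. exp (x * P \<sigma> + y * Q \<sigma>)) = K * (cosh (x + y) * cosh (x - y)) ^ n"
    and [measurable]: "a \<in> borel_measurable lborel" "b \<in> borel_measurable lborel"
    and a_le: "\<And>x. norm (a x) \<le> 1" and b_le: "\<And>x. norm (b x) \<le> 1"
  shows "hs_expectation \<kappa> n \<Omega> P Q
            (\<lambda>\<sigma>. (\<integral>s. normal_density (P \<sigma> / qN n ^ 3) (1 / qN n) s *\<^sub>R a s \<partial>lborel)
               * (\<integral>v. normal_density (Q \<sigma> / qN n ^ 2) (1 / sqrt \<kappa>) v *\<^sub>R b v \<partial>lborel))
     = smoothed_integral \<kappa> n a b / smoothed_integral \<kappa> n (\<lambda>_. 1) (\<lambda>_. 1)"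
proof -
  define W where "W = (\<Sum>\<tau>\<in>\<Omega>. hs_weight \<kappa> n (P \<tau>) (Q \<tau>))"
  define C where "C = 2 * pi / (qN n * sqrt \<kappa> * K)"
  have K: "0 < K" using mgf_constant_pos[OF fin ne mgf] .
  have W: "0 < W" unfolding W_def using fin ne by (intro sum_pos) (auto simp: hs_weight_def)
  have C: "0 < C" using qN_pos[OF n] K \<kappa> by (simp add: C_def)
  have I_ab: "smoothed_integral \<kappa> n a b = complex_of_real C *
       (\<Sum>\<sigma>\<in>\<Omega>. complex_of_real (hs_weight \<kappa> n (P \<sigma>) (Q \<sigma>))
              * (\<integral>s. normal_density (P \<sigma> / qN n ^ 3) (1 / qN n) s *\<^sub>R a s \<partial>lborel)
              * (\<integral>v. normal_density (Q \<sigma> / qN n ^ 2) (1 / sqrt \<kappa>) v *\<^sub>R b v \<partial>lborel))"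
    unfolding C_def by (rule smoothed_integral_eq_sum[OF n \<kappa> fin K mgf]) (use a_le b_le in auto)
  have "smoothed_integral \<kappa> n (\<lambda>_. 1) (\<lambda>_. 1) = complex_of_real C *
       (\<Sum>\<sigma>\<in>\<Omega>. complex_of_real (hs_weight \<kappa> n (P \<sigma>) (Q \<sigma>))
              * (\<integral>s. normal_density (P \<sigma> / qN n ^ 3) (1 / qN n) s *\<^sub>R (1::complex) \<partial>lborel)
              * (\<integral>v. normal_density (Q \<sigma> / qN n ^ 2) (1 / sqrt \<kappa>) v *\<^sub>R (1::complex) \<partial>lborel))"
    unfolding C_def by (rule smoothed_integral_eq_sum[OF n \<kappa> fin K mgf]) auto
  also have "\<dots> = complex_of_real C * complex_of_real W"
    using qN_pos[OF n] \<kappa> by (simp add: integral_normal_density_one W_def)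
  finally have I_11: "smoothed_integral \<kappa> n (\<lambda>_. 1) (\<lambda>_. 1) = complex_of_real C * complex_of_real W" .
  have "smoothed_integral \<kappa> n a b / smoothed_integral \<kappa> n (\<lambda>_. 1) (\<lambda>_. 1)
      = (\<Sum>\<sigma>\<in>\<Omega>. complex_of_real (hs_weight \<kappa> n (P \<sigma>) (Q \<sigma>))
              * (\<integral>s. normal_density (P \<sigma> / qN n ^ 3) (1 / qN n) s *\<^sub>R a s \<partial>lborel)
              * (\<integral>v. normal_density (Q \<sigma> / qN n ^ 2) (1 / sqrt \<kappa>) v *\<^sub>R b v \<partial>lborel)) / complex_of_real W"
    using C unfolding I_ab I_11 by simp
  also have "\<dots> = hs_expectation \<kappa> n \<Omega> P Q
            (\<lambda>\<sigma>. (\<integral>s. normal_density (P \<sigma> / qN n ^ 3) (1 / qN n) s *\<^sub>R a s \<partial>lborel)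
               * (\<integral>v. normal_density (Q \<sigma> / qN n ^ 2) (1 / sqrt \<kappa>) v *\<^sub>R b v \<partial>lborel))"
    unfolding hs_expectation_def W_def[symmetric] sum_divide_distrib using W
    by (intro sum.cong refl) (simp add: field_simps)
  finally show ?thesis ..
qed

lemma tendsto_smoothed_integral_ratio:
  fixes a b :: "real \<Rightarrow> complex"
  assumes \<kappa>: "0 < \<kappa>" "\<kappa> < 1"
    and ab [measurable]: "a \<in> borel_measurable lborel" "b \<in> borel_measurable lborel"
    and a_le: "\<And>x. norm (a x) \<le> 1" and b_le: "\<And>x. norm (b x) \<le> 1"
  shows "(\<lambda>n. smoothed_integral \<kappa> n a b / smoothed_integral \<kappa> n (\<lambda>_. 1) (\<lambda>_. 1))
     \<longlonglongrightarrow> (\<integral>s. quartic_weight s *\<^sub>R a s \<partial>lborel) / complex_of_real (\<integral>s. quartic_weight s \<partial>lborel)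
         * (\<integral>v. normal_density 0 (sqrt (1 / (\<kappa> * (1 - \<kappa>)))) v *\<^sub>R b v \<partial>lborel)"
proof -
  define c where "c = sqrt (2 * pi / (\<kappa> * (1 - \<kappa>)))"
  define Z where "Z = (\<integral>s. quartic_weight s \<partial>lborel)"
  have c: "0 < c" and Z: "0 < Z"
    using \<kappa> integral_quartic_weight_pos by (simp_all add: c_def Z_def)
  have "(\<lambda>n. smoothed_integral \<kappa> n (\<lambda>_. 1) (\<lambda>_. 1)) \<longlonglongrightarrow> complex_of_real Z * (c *\<^sub>R 1)"
    using tendsto_smoothed_integral[OF \<kappa>, of "\<lambda>_. 1" "\<lambda>_. 1"] \<kappa>
    by (simp add: integral_quartic_weight_scaleR_one integral_normal_density_one Z_def c_def)
  from tendsto_divide[OF tendsto_smoothed_integral[OF \<kappa> ab a_le b_le] this]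
  show ?thesis using c Z unfolding c_def[symmetric] Z_def[symmetric]
    by (simp add: scaleR_conv_of_real field_simps)
qed

lemma tendsto_hs_expectation:
  fixes \<Omega> :: "nat \<Rightarrow> 'a set" and P Q :: "nat \<Rightarrow> 'a \<Rightarrow> real" and K :: "nat \<Rightarrow> real"
    and a b :: "real \<Rightarrow> complex"
  assumes \<kappa>: "0 < \<kappa>" "\<kappa> < 1" and fin: "\<And>n. finite (\<Omega> n)" and ne: "\<And>n. \<Omega> n \<noteq> {}"
    and mgf: "\<And>n x y. n \<ge> 1 \<Longrightarrow>
      (\<Sum>\<sigma>\<in>\<Omega> n. exp (x * P n \<sigma> + y * Q n \<sigma>)) = K n * (cosh (x + y) * cosh (x - y)) ^ n"
    and ab [measurable]: "a \<in> borel_measurable lborel" "b \<in> borel_measurable lborel"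
    and a_le: "\<And>x. norm (a x) \<le> 1" and b_le: "\<And>x. norm (b x) \<le> 1"
  shows "(\<lambda>n. hs_expectation \<kappa> n (\<Omega> n) (P n) (Q n)
            (\<lambda>\<sigma>. (\<integral>s. normal_density (P n \<sigma> / qN n ^ 3) (1 / qN n) s *\<^sub>R a s \<partial>lborel)
               * (\<integral>v. normal_density (Q n \<sigma> / qN n ^ 2) (1 / sqrt \<kappa>) v *\<^sub>R b v \<partial>lborel)))
     \<longlonglongrightarrow> (\<integral>s. quartic_weight s *\<^sub>R a s \<partial>lborel) / complex_of_real (\<integral>s. quartic_weight s \<partial>lborel)
         * (\<integral>v. normal_density 0 (sqrt (1 / (\<kappa> * (1 - \<kappa>)))) v *\<^sub>R b v \<partial>lborel)"
  using tendsto_smoothed_integral_ratio[OF \<kappa> ab a_le b_le]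
proof (rule Lim_transform_eventually)
  show "\<forall>\<^sub>F n in sequentially. smoothed_integral \<kappa> n a b / smoothed_integral \<kappa> n (\<lambda>_. 1) (\<lambda>_. 1)
      = hs_expectation \<kappa> n (\<Omega> n) (P n) (Q n)
            (\<lambda>\<sigma>. (\<integral>s. normal_density (P n \<sigma> / qN n ^ 3) (1 / qN n) s *\<^sub>R a s \<partial>lborel)
               * (\<integral>v. normal_density (Q n \<sigma> / qN n ^ 2) (1 / sqrt \<kappa>) v *\<^sub>R b v \<partial>lborel))"
    using eventually_ge_at_top[of 1]
    by eventually_elim
       (simp add: hs_expectation_eq_smoothed_integral_ratio[OF _ \<kappa>(1) fin ne mgf ab a_le b_le])
qed

lemma integral_normal_densities_iexp:
  assumes "0 < \<sigma>1" "0 < \<sigma>2"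
  shows "(\<integral>s. normal_density m1 \<sigma>1 s *\<^sub>R iexp (t * s) \<partial>lborel) * (\<integral>v. normal_density m2 \<sigma>2 v *\<^sub>R iexp (u * v) \<partial>lborel)
    = iexp (t * m1 + u * m2) * complex_of_real (exp (- ((\<sigma>1 * t)^2) / 2) * exp (- ((\<sigma>2 * u)^2) / 2))"
  using assms by (simp only: integral_normal_density_iexp) (simp add: distrib_left exp_add mult_ac)

lemma hs_expectation_normal_iexp:
  assumes "n \<ge> 1" "0 < \<kappa>"
  shows "hs_expectation \<kappa> n \<Omega> P Q
      (\<lambda>\<sigma>. (\<integral>s. normal_density (P \<sigma> / qN n ^ 3) (1 / qN n) s *\<^sub>R iexp (t * s) \<partial>lborel)
         * (\<integral>v. normal_density (Q \<sigma> / qN n ^ 2) (1 / sqrt \<kappa>) v *\<^sub>R iexp (u * v) \<partial>lborel))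
    = hs_expectation \<kappa> n \<Omega> P Q (\<lambda>\<sigma>. iexp (t * (P \<sigma> / qN n ^ 3) + u * (Q \<sigma> / qN n ^ 2)))
      * complex_of_real (exp (- ((1 / qN n * t)^2) / 2) * exp (- ((1 / sqrt \<kappa> * u)^2) / 2))"
proof -
  have "0 < 1 / qN n" "0 < 1 / sqrt \<kappa>" using qN_pos[OF assms(1)] assms(2) by simp_all
  then show ?thesis by (simp only: integral_normal_densities_iexp hs_expectation_mult_right)
qed

lemma tendsto_hs_joint_char:
  fixes \<Omega> :: "nat \<Rightarrow> 'a set" and P Q :: "nat \<Rightarrow> 'a \<Rightarrow> real" and K :: "nat \<Rightarrow> real"
  assumes \<kappa>: "0 < \<kappa>" "\<kappa> < 1" and fin: "\<And>n. finite (\<Omega> n)" and ne: "\<And>n. \<Omega> n \<noteq> {}"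
    and mgf: "\<And>n x y. n \<ge> 1 \<Longrightarrow>
      (\<Sum>\<sigma>\<in>\<Omega> n. exp (x * P n \<sigma> + y * Q n \<sigma>)) = K n * (cosh (x + y) * cosh (x - y)) ^ n"
  shows "(\<lambda>n. hs_expectation \<kappa> n (\<Omega> n) (P n) (Q n)
            (\<lambda>\<sigma>. iexp (t * (P n \<sigma> / qN n ^ 3) + u * (Q n \<sigma> / qN n ^ 2))))
         \<longlonglongrightarrow> char rho t * complex_of_real (exp (- (u^2) / (2 * (1 - \<kappa>))))"
proof -
  define w where "w = 1 / (\<kappa> * (1 - \<kappa>))"
  have w: "0 < w" using \<kappa> by (simp add: w_def)
  define E where "E = (\<lambda>n. hs_expectation \<kappa> n (\<Omega> n) (P n) (Q n)
    (\<lambda>\<sigma>. iexp (t * (P n \<sigma> / qN n ^ 3) + u * (Q n \<sigma> / qN n ^ 2))))"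
  \<comment> \<open>the characteristic function of the Gaussian noise\<close>
  define g where "g n = exp (- ((1 / qN n * t)^2) / 2) * exp (- ((1 / sqrt \<kappa> * u)^2) / 2)" for n
  have "(\<lambda>n. hs_expectation \<kappa> n (\<Omega> n) (P n) (Q n)
            (\<lambda>\<sigma>. (\<integral>s. normal_density (P n \<sigma> / qN n ^ 3) (1 / qN n) s *\<^sub>R iexp (t * s) \<partial>lborel)
               * (\<integral>v. normal_density (Q n \<sigma> / qN n ^ 2) (1 / sqrt \<kappa>) v *\<^sub>R iexp (u * v) \<partial>lborel)))
     \<longlonglongrightarrow> char rho t * (\<integral>v. normal_density 0 (sqrt w) v *\<^sub>R iexp (u * v) \<partial>lborel)"
    unfolding char_rho w_def by (rule tendsto_hs_expectation[OF \<kappa> fin ne mgf]) auto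
  moreover have "\<forall>\<^sub>F n in sequentially. hs_expectation \<kappa> n (\<Omega> n) (P n) (Q n)
            (\<lambda>\<sigma>. (\<integral>s. normal_density (P n \<sigma> / qN n ^ 3) (1 / qN n) s *\<^sub>R iexp (t * s) \<partial>lborel)
               * (\<integral>v. normal_density (Q n \<sigma> / qN n ^ 2) (1 / sqrt \<kappa>) v *\<^sub>R iexp (u * v) \<partial>lborel))
      = E n * complex_of_real (g n)"
    using eventually_ge_at_top[of 1]
    by eventually_elim (simp only: E_def g_def hs_expectation_normal_iexp[OF _ \<kappa>(1)])
  ultimately have "(\<lambda>n. E n * complex_of_real (g n))
    \<longlonglongrightarrow> char rho t * (\<integral>v. normal_density 0 (sqrt w) v *\<^sub>R iexp (u * v) \<partial>lborel)"
    by (rule Lim_transform_eventually)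
  moreover have "(\<integral>v. normal_density 0 (sqrt w) v *\<^sub>R iexp (u * v) \<partial>lborel)
      = complex_of_real (exp (- (w * u^2) / 2))"
    using integral_normal_density_iexp[of "sqrt w" 0 u] w by (simp add: power_mult_distrib)
  ultimately have lim: "(\<lambda>n. E n * complex_of_real (g n))
    \<longlonglongrightarrow> char rho t * complex_of_real (exp (- (w * u^2) / 2))"
    by simp
  from tendsto_mult[OF tendsto_exp_neg_sq_div_qN tendsto_const]
  have "g \<longlonglongrightarrow> exp (- ((1 / sqrt \<kappa> * u)^2) / 2)"
    unfolding g_def by simp
  from tendsto_divide[OF lim tendsto_of_real[OF this]]
  have lim': "(\<lambda>n. E n * complex_of_real (g n) / complex_of_real (g n))
    \<longlonglongrightarrow> char rho t * complex_of_real (exp (- (w * u^2) / 2) / exp (- ((1 / sqrt \<kappa> * u)^2) / 2))"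
    by simp
  have cancel: "(\<lambda>n. E n * complex_of_real (g n) / complex_of_real (g n)) = E"
    by (simp add: fun_eq_iff g_def)
  have variance: "exp (- (w * u^2) / 2) / exp (- ((1 / sqrt \<kappa> * u)^2) / 2) = exp (- (u^2) / (2 * (1 - \<kappa>)))"
    unfolding w_def exp_diff[symmetric] using \<kappa>
    by (simp add: power_mult_distrib power_divide field_simps)
  have "E \<longlonglongrightarrow> char rho t * complex_of_real (exp (- (u^2) / (2 * (1 - \<kappa>))))"
    using lim' unfolding cancel variance .
  then show ?thesis unfolding E_def .
qed

lemma hs_limit_laws:
  fixes G :: "nat \<Rightarrow> 'a pmf" and \<Omega> :: "nat \<Rightarrow> 'a set" and P Q :: "nat \<Rightarrow> 'a \<Rightarrow> real"
    and K :: "nat \<Rightarrow> real"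
  assumes \<kappa>: "0 < \<kappa>" "\<kappa> < 1" and fin: "\<And>n. finite (\<Omega> n)" and supp: "\<And>n. set_pmf (G n) \<subseteq> \<Omega> n"
    and pmf_G: "\<And>n \<sigma>. n \<ge> 1 \<Longrightarrow> \<sigma> \<in> \<Omega> n \<Longrightarrow>
      pmf (G n) \<sigma> = hs_weight \<kappa> n (P n \<sigma>) (Q n \<sigma>) / (\<Sum>\<tau>\<in>\<Omega> n. hs_weight \<kappa> n (P n \<tau>) (Q n \<tau>))"
    and mgf: "\<And>n x y. n \<ge> 1 \<Longrightarrow>
      (\<Sum>\<sigma>\<in>\<Omega> n. exp (x * P n \<sigma> + y * Q n \<sigma>)) = K n * (cosh (x + y) * cosh (x - y)) ^ n"
  shows "weak_conv_m (\<lambda>n. measure_pmf (map_pmf (\<lambda>\<sigma>. Q n \<sigma> / qN n ^ 2) (G n))) (gaussian (1 / (1 - \<kappa>)))"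
    and "weak_conv_m (\<lambda>n. measure_pmf (map_pmf (\<lambda>\<sigma>. P n \<sigma> / qN n ^ 3) (G n))) rho"
proof -
  have ne: "\<Omega> n \<noteq> {}" for n using supp[of n] set_pmf_not_empty[of "G n"] by blast
  have char_eq: "\<forall>\<^sub>F n in sequentially. hs_expectation \<kappa> n (\<Omega> n) (P n) (Q n) (\<lambda>\<sigma>. iexp (t * T n \<sigma>))
      = (\<integral>\<sigma>. iexp (t * T n \<sigma>) \<partial>measure_pmf (G n))" for t and T :: "nat \<Rightarrow> 'a \<Rightarrow> real"
    using eventually_ge_at_top[of 1]
  proof eventually_elim
    case (elim n)
    have "(\<integral>\<sigma>. iexp (t * T n \<sigma>) \<partial>measure_pmf (G n)) = (\<Sum>\<sigma>\<in>\<Omega> n. pmf (G n) \<sigma> *\<^sub>R iexp (t * T n \<sigma>))"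
      using supp[of n] by (intro integral_measure_pmf fin) auto
    then show ?case
      unfolding hs_expectation_def by (simp add: pmf_G[OF elim] scaleR_conv_of_real cong: sum.cong)
  qed
  show "weak_conv_m (\<lambda>n. measure_pmf (map_pmf (\<lambda>\<sigma>. Q n \<sigma> / qN n ^ 2) (G n))) (gaussian (1 / (1 - \<kappa>)))"
  proof (rule weak_conv_m_map_pmf_if_char_tendsto[OF real_distribution_gaussian])
    show "0 < 1 / (1 - \<kappa>)" using \<kappa> by simp
    fix t
    have "(\<lambda>n. hs_expectation \<kappa> n (\<Omega> n) (P n) (Q n) (\<lambda>\<sigma>. iexp (t * (Q n \<sigma> / qN n ^ 2))))
        \<longlonglongrightarrow> char rho 0 * complex_of_real (exp (- (t^2) / (2 * (1 - \<kappa>))))"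
      using tendsto_hs_joint_char[OF \<kappa> fin ne mgf, where t=0 and u=t] by simp
    also have "char rho 0 * complex_of_real (exp (- (t^2) / (2 * (1 - \<kappa>))))
        = char (gaussian (1 / (1 - \<kappa>))) t"
      using \<kappa> by (simp add: char_gaussian real_distribution.char_zero[OF real_distribution_rho])
    finally show "(\<lambda>n. \<integral>\<sigma>. iexp (t * (Q n \<sigma> / qN n ^ 2)) \<partial>measure_pmf (G n))
        \<longlonglongrightarrow> char (gaussian (1 / (1 - \<kappa>))) t"
      by (rule Lim_transform_eventually[OF _ char_eq])
  qed
  show "weak_conv_m (\<lambda>n. measure_pmf (map_pmf (\<lambda>\<sigma>. P n \<sigma> / qN n ^ 3) (G n))) rho"
  proof (rule weak_conv_m_map_pmf_if_char_tendsto[OF real_distribution_rho])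
    fix t
    have "(\<lambda>n. hs_expectation \<kappa> n (\<Omega> n) (P n) (Q n) (\<lambda>\<sigma>. iexp (t * (P n \<sigma> / qN n ^ 3))))
        \<longlonglongrightarrow> char rho t"
      using tendsto_hs_joint_char[OF \<kappa> fin ne mgf, where u=0] by simp
    then show "(\<lambda>n. \<integral>\<sigma>. iexp (t * (P n \<sigma> / qN n ^ 3)) \<partial>measure_pmf (G n)) \<longlonglongrightarrow> char rho t"
      by (rule Lim_transform_eventually[OF _ char_eq])
  qed
qed

section \<open>The block spin model\<close>

lemma finite_spin_configs: "finite (spin_configs N)"
  unfolding spin_configs_def by (rule finite_PiE) auto

lemma spin_configs_nonempty: "spin_configs N \<noteq> {}"
  unfolding spin_configs_def by (auto simp: PiE_eq_empty_iff)

lemma block_hamiltonian_eq: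
  assumes S: "S \<subseteq> {1..N}"
  shows "block_hamiltonian N \<alpha> \<beta> S \<sigma> =
     - (\<beta> / (2 * real N)) * ((\<Sum>i\<in>S. \<sigma> i)^2 + (\<Sum>i\<in>{1..N} - S. \<sigma> i)^2)
     - (\<alpha> / (2 * real N)) * (2 * (\<Sum>i\<in>S. \<sigma> i) * (\<Sum>i\<in>{1..N} - S. \<sigma> i))"
proof -
  define R where "R = {1..N} - S"
  have fin: "finite S" "finite R" using S finite_subset by (auto simp: R_def)
  have disj: "S \<inter> R = {}" by (auto simp: R_def)
  have same: "{(i,j). i \<in> {1..N} \<and> j \<in> {1..N} \<and> same_block S i j} = S \<times> S \<union> R \<times> R"
    using S by (auto simp: same_block_def R_def)
  have other: "{(i,j). i \<in> {1..N} \<and> j \<in> {1..N} \<and> \<not> same_block S i j} = S \<times> R \<union> R \<times> S"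
    using S by (auto simp: same_block_def R_def)
  have prod: "(\<Sum>(i,j)\<in>X \<times> Y. \<sigma> i * \<sigma> j) = (\<Sum>i\<in>X. \<sigma> i) * (\<Sum>j\<in>Y. \<sigma> j)" if "finite X" "finite Y" for X Y
    using that by (simp add: sum_product sum.cartesian_product)
  have "(\<Sum>(i,j)\<in>S \<times> S \<union> R \<times> R. \<sigma> i * \<sigma> j) = (\<Sum>i\<in>S. \<sigma> i)^2 + (\<Sum>i\<in>R. \<sigma> i)^2"
    using fin disj by (subst sum.union_disjoint) (auto simp: prod power2_eq_square)
  moreover have "(\<Sum>(i,j)\<in>S \<times> R \<union> R \<times> S. \<sigma> i * \<sigma> j) = 2 * (\<Sum>i\<in>S. \<sigma> i) * (\<Sum>i\<in>R. \<sigma> i)"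
    using fin disj by (subst sum.union_disjoint) (auto simp: prod)
  ultimately show ?thesis unfolding block_hamiltonian_def same other R_def by simp
qed

lemma sum_exp_linear_spin_configs:
  assumes "finite I"
  shows "(\<Sum>\<sigma>\<in>PiE I (\<lambda>_. {-1, 1::real}). exp (\<Sum>i\<in>I. c i * \<sigma> i)) = (\<Prod>i\<in>I. 2 * cosh (c i))"
proof -
  have "(\<Prod>i\<in>I. 2 * cosh (c i)) = (\<Prod>i\<in>I. \<Sum>y\<in>{-1, 1::real}. exp (c i * y))"
    by (intro prod.cong refl) (simp add: cosh_field_def)
  also have "\<dots> = (\<Sum>\<sigma>\<in>PiE I (\<lambda>_. {-1, 1::real}). \<Prod>i\<in>I. exp (c i * \<sigma> i))"
    by (rule prod_sum_PiE) (use assms in auto)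
  also have "\<dots> = (\<Sum>\<sigma>\<in>PiE I (\<lambda>_. {-1, 1::real}). exp (\<Sum>i\<in>I. c i * \<sigma> i))"
    using assms by (simp add: exp_sum)
  finally show ?thesis ..
qed

lemma block_spin_mgf:
  assumes S: "S \<subseteq> {1..2*n}" and card: "card S = n"
  shows "(\<Sum>\<sigma>\<in>spin_configs (2*n). exp (a * (\<Sum>i\<in>S. \<sigma> i) + b * (\<Sum>i\<in>{1..2*n} - S. \<sigma> i)))
       = 4^n * (cosh a * cosh b)^n"
proof -
  define I where "I = {1..2*n}"
  define R where "R = I - S"
  define c where "c i = (if i \<in> S then a else b)" for i
  have fin: "finite S" "finite R" using S finite_subset by (auto simp: R_def I_def)
  have card_R: "card R = n" unfolding R_def I_def using S card fin by (subst card_Diff_subset) auto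
  have split: "I = S \<union> R" "S \<inter> R = {}" using S by (auto simp: R_def I_def)
  have "a * (\<Sum>i\<in>S. \<sigma> i) + b * (\<Sum>i\<in>R. \<sigma> i) = (\<Sum>i\<in>I. c i * \<sigma> i)" for \<sigma> :: "nat \<Rightarrow> real"
  proof -
    have "(\<Sum>i\<in>I. c i * \<sigma> i) = (\<Sum>i\<in>S. c i * \<sigma> i) + (\<Sum>i\<in>R. c i * \<sigma> i)"
      unfolding split(1) using fin split(2) by (rule sum.union_disjoint)
    also have "\<dots> = a * (\<Sum>i\<in>S. \<sigma> i) + b * (\<Sum>i\<in>R. \<sigma> i)"
      by (simp add: c_def R_def sum_distrib_left)
    finally show ?thesis ..
  qed
  then have "(\<Sum>\<sigma>\<in>spin_configs (2*n). exp (a * (\<Sum>i\<in>S. \<sigma> i) + b * (\<Sum>i\<in>{1..2*n} - S. \<sigma> i)))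
      = (\<Prod>i\<in>I. 2 * cosh (c i))"
    unfolding spin_configs_def I_def[symmetric] R_def[symmetric]
    by (simp add: sum_exp_linear_spin_configs I_def)
  also have "\<dots> = (\<Prod>i\<in>S. 2 * cosh (c i)) * (\<Prod>i\<in>R. 2 * cosh (c i))"
    unfolding split(1) using fin split(2) by (rule prod.union_disjoint)
  also have "\<dots> = (2 * cosh a)^n * (2 * cosh b)^n"
    using card card_R by (simp add: c_def R_def)
  also have "\<dots> = 4^n * (cosh a * cosh b)^n"
    by (simp add: power_mult_distrib flip: power_mult_distrib[of 2 2 n])
  finally show ?thesis .
qed

lemma partition_fn_pos: "0 < partition_fn N \<alpha> \<beta> S"
  unfolding partition_fn_def using finite_spin_configs spin_configs_nonempty by (intro sum_pos) auto

lemma pmf_gibbs_pmf: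
  "pmf (gibbs_pmf N \<alpha> \<beta> S) \<sigma> = (if \<sigma> \<in> spin_configs N
       then exp (- block_hamiltonian N \<alpha> \<beta> S \<sigma>) / partition_fn N \<alpha> \<beta> S else 0)"
  unfolding gibbs_pmf_def
proof (rule pmf_embed_pmf)
  let ?f = "\<lambda>\<sigma>. if \<sigma> \<in> spin_configs N then exp (- block_hamiltonian N \<alpha> \<beta> S \<sigma>) / partition_fn N \<alpha> \<beta> S else 0"
  show "0 \<le> ?f \<sigma>" for \<sigma>
    using partition_fn_pos[of N \<alpha> \<beta> S] by auto
  have "(\<integral>\<^sup>+\<sigma>. ennreal (?f \<sigma>) \<partial>count_space UNIV) = (\<Sum>\<sigma>\<in>spin_configs N. ennreal (?f \<sigma>))"
    by (rule nn_integral_count_space') (auto simp: finite_spin_configs)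
  also have "\<dots> = ennreal (\<Sum>\<sigma>\<in>spin_configs N. exp (- block_hamiltonian N \<alpha> \<beta> S \<sigma>) / partition_fn N \<alpha> \<beta> S)"
    using partition_fn_pos[of N \<alpha> \<beta> S] by (subst sum_ennreal) auto
  also have "\<dots> = 1"
    using partition_fn_pos[of N \<alpha> \<beta> S] by (simp add: partition_fn_def flip: sum_divide_distrib)
  finally show "(\<integral>\<^sup>+\<sigma>. ennreal (?f \<sigma>) \<partial>count_space UNIV) = 1" .
qed

lemma set_pmf_gibbs_pmf: "set_pmf (gibbs_pmf N \<alpha> \<beta> S) \<subseteq> spin_configs N"
  by (auto simp: set_pmf_iff pmf_gibbs_pmf split: if_splits)

definition block_sum :: "real \<Rightarrow> nat \<Rightarrow> nat set \<Rightarrow> (nat \<Rightarrow> real) \<Rightarrow> real" where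
  "block_sum s n S \<sigma> = real n * (mag1 (2*n) S \<sigma> + s * mag2 (2*n) S \<sigma>)"

lemma block_sum_eq: "n \<ge> 1 \<Longrightarrow> block_sum s n S \<sigma> = (\<Sum>i\<in>S. \<sigma> i) + s * (\<Sum>i\<in>{1..2*n} - S. \<sigma> i)"
  by (simp add: block_sum_def mag1_def mag2_def field_simps)

lemma exp_neg_block_hamiltonian_eq_hs_weight:
  assumes S: "S \<subseteq> {1..2*n}" and n: "n \<ge> 1"
    and s: "s \<in> {-1, 1}" and \<beta>: "\<beta> + s * \<alpha> = 2" and \<kappa>: "\<beta> - s * \<alpha> = 2 * \<kappa>"
  shows "exp (- block_hamiltonian (2*n) \<alpha> \<beta> S \<sigma>) = hs_weight \<kappa> n (block_sum s n S \<sigma>) (block_sum (-s) n S \<sigma>)"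
proof -
  define A where "A = (\<Sum>i\<in>S. \<sigma> i)"
  define B where "B = (\<Sum>i\<in>{1..2*n} - S. \<sigma> i)"
  have "- block_hamiltonian (2*n) \<alpha> \<beta> S \<sigma> = (\<beta> * (A^2 + B^2) + 2 * \<alpha> * A * B) / (4 * real n)"
    unfolding block_hamiltonian_eq[OF S] A_def B_def using n by (simp add: field_simps)
  also have "\<beta> * (A^2 + B^2) + 2 * \<alpha> * A * B = (A + s * B)^2 + \<kappa> * (A - s * B)^2"
  proof -
    have "2 * (\<beta> * (A^2 + B^2) + 2 * \<alpha> * A * B) = (\<beta> + s * \<alpha>) * (A + s * B)^2 + (\<beta> - s * \<alpha>) * (A - s * B)^2"
      using s by (auto simp: algebra_simps power2_eq_square)
    then have "2 * (\<beta> * (A^2 + B^2) + 2 * \<alpha> * A * B) = 2 * ((A + s * B)^2 + \<kappa> * (A - s * B)^2)"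
      unfolding \<beta> \<kappa> by (simp add: algebra_simps)
    then show ?thesis by simp
  qed
  finally show ?thesis
    using n by (simp add: hs_weight_def block_sum_eq A_def B_def)
qed

lemma block_sum_mgf:
  assumes S: "S \<subseteq> {1..2*n}" and card: "card S = n" and n: "n \<ge> 1" and s: "s \<in> {-1, 1}"
  shows "(\<Sum>\<sigma>\<in>spin_configs (2*n). exp (x * block_sum s n S \<sigma> + y * block_sum (-s) n S \<sigma>))
       = 4^n * (cosh (x + y) * cosh (x - y)) ^ n"
proof -
  have "x * block_sum s n S \<sigma> + y * block_sum (-s) n S \<sigma>
      = (x + y) * (\<Sum>i\<in>S. \<sigma> i) + (s * (x - y)) * (\<Sum>i\<in>{1..2*n} - S. \<sigma> i)" for \<sigma>
    using n by (simp add: block_sum_eq algebra_simps)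
  then have "(\<Sum>\<sigma>\<in>spin_configs (2*n). exp (x * block_sum s n S \<sigma> + y * block_sum (-s) n S \<sigma>))
      = 4^n * (cosh (x + y) * cosh (s * (x - y))) ^ n"
    by (simp only: block_spin_mgf[OF S card])
  also have "cosh (s * (x - y)) = cosh (x - y)" using s by auto
  finally show ?thesis .
qed

lemma block_spin_limits:
  fixes \<alpha> \<beta> s \<kappa> v :: real and S :: "nat \<Rightarrow> nat set"
  assumes S: "\<And>n. S n \<subseteq> {1..2*n}" and card: "\<And>n. card (S n) = n"
    and s: "s \<in> {-1, 1}" and \<beta>: "\<beta> + s * \<alpha> = 2" and \<kappa>: "\<beta> - s * \<alpha> = 2 * \<kappa>" "0 < \<kappa>" "\<kappa> < 1"
    and v: "v = 1 / (1 - \<kappa>)"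
  shows "weak_conv_m (\<lambda>n. gibbs_law (2*n) \<alpha> \<beta> (S n)
              (\<lambda>\<sigma>. sqrt (real (2*n)) / 2 * (mag1 (2*n) (S n) \<sigma> - s * mag2 (2*n) (S n) \<sigma>)))
           (gaussian v)"
    and "weak_conv_m (\<lambda>n. gibbs_law (2*n) \<alpha> \<beta> (S n)
              (\<lambda>\<sigma>. real (2*n) powr (1/4) / 2 * (mag1 (2*n) (S n) \<sigma> + s * mag2 (2*n) (S n) \<sigma>)))
           rho"
proof -
  have pmf: "pmf (gibbs_pmf (2*n) \<alpha> \<beta> (S n)) \<sigma> = hs_weight \<kappa> n (block_sum s n (S n) \<sigma>) (block_sum (-s) n (S n) \<sigma>)
      / (\<Sum>\<tau>\<in>spin_configs (2*n). hs_weight \<kappa> n (block_sum s n (S n) \<tau>) (block_sum (-s) n (S n) \<tau>))"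
    if "n \<ge> 1" "\<sigma> \<in> spin_configs (2*n)" for n \<sigma>
    using that exp_neg_block_hamiltonian_eq_hs_weight[OF S that(1) s \<beta> \<kappa>(1)]
    by (simp add: pmf_gibbs_pmf partition_fn_def cong: sum.cong)
  note laws = hs_limit_laws[where G="\<lambda>n. gibbs_pmf (2*n) \<alpha> \<beta> (S n)" and \<Omega>="\<lambda>n. spin_configs (2*n)",
      OF \<kappa>(2,3) finite_spin_configs set_pmf_gibbs_pmf pmf block_sum_mgf[OF S card _ s]]
  have "(\<lambda>\<sigma>. sqrt (real (2*n)) / 2 * (mag1 (2*n) (S n) \<sigma> - s * mag2 (2*n) (S n) \<sigma>))
      = (\<lambda>\<sigma>. block_sum (-s) n (S n) \<sigma> / qN n ^ 2)"
    "(\<lambda>\<sigma>. real (2*n) powr (1/4) / 2 * (mag1 (2*n) (S n) \<sigma> + s * mag2 (2*n) (S n) \<sigma>))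
      = (\<lambda>\<sigma>. block_sum s n (S n) \<sigma> / qN n ^ 3)" for n
    by (simp_all only: sqrt_scaling_eq_qN root4_scaling_eq_qN block_sum_def mult_minus_left diff_conv_add_uminus)
  then show "weak_conv_m (\<lambda>n. gibbs_law (2*n) \<alpha> \<beta> (S n)
              (\<lambda>\<sigma>. sqrt (real (2*n)) / 2 * (mag1 (2*n) (S n) \<sigma> - s * mag2 (2*n) (S n) \<sigma>)))
           (gaussian v)"
    and "weak_conv_m (\<lambda>n. gibbs_law (2*n) \<alpha> \<beta> (S n)
              (\<lambda>\<sigma>. real (2*n) powr (1/4) / 2 * (mag1 (2*n) (S n) \<sigma> + s * mag2 (2*n) (S n) \<sigma>)))
           rho"
    unfolding gibbs_law_def v using laws by simp_all
qed

theorem theorem3p1: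
  fixes \<alpha> \<beta> :: real and S :: "nat \<Rightarrow> nat set"
  assumes "\<beta> > 0" and "\<bar>\<alpha>\<bar> < \<beta>" and "\<bar>\<alpha>\<bar> + \<beta> = 2"
    and "\<And>n. S n \<subseteq> {1..2*n}" and "\<And>n. card (S n) = n"
  shows
    "(\<alpha> > 0 \<longrightarrow> weak_conv_m
        (\<lambda>n. gibbs_law (2*n) \<alpha> \<beta> (S n)
              (\<lambda>\<sigma>. sqrt (real (2*n)) / 2 * (mag1 (2*n) (S n) \<sigma> - mag2 (2*n) (S n) \<sigma>)))
        (gaussian (2 / (2 - (\<beta> - \<alpha>)))))
   \<and> (\<alpha> < 0 \<longrightarrow> weak_conv_m
        (\<lambda>n. gibbs_law (2*n) \<alpha> \<beta> (S n)
              (\<lambda>\<sigma>. real (2*n) powr (1/4) / 2 * (mag1 (2*n) (S n) \<sigma> - mag2 (2*n) (S n) \<sigma>)))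
        rho)
   \<and> (\<alpha> > 0 \<longrightarrow> weak_conv_m
        (\<lambda>n. gibbs_law (2*n) \<alpha> \<beta> (S n)
              (\<lambda>\<sigma>. real (2*n) powr (1/4) / 2 * (mag1 (2*n) (S n) \<sigma> + mag2 (2*n) (S n) \<sigma>)))
        rho)
   \<and> (\<alpha> < 0 \<longrightarrow> weak_conv_m
        (\<lambda>n. gibbs_law (2*n) \<alpha> \<beta> (S n)
              (\<lambda>\<sigma>. sqrt (real (2*n)) / 2 * (mag1 (2*n) (S n) \<sigma> + mag2 (2*n) (S n) \<sigma>)))
        (gaussian (- 1 / \<alpha>)))"
proof -
  consider "\<alpha> > 0" | "\<alpha> < 0" | "\<alpha> = 0" by linarith
  then show ?thesis
  proof cases
    case 1
    have "\<beta> + 1 * \<alpha> = 2" "\<beta> - 1 * \<alpha> = 2 * ((\<beta> - \<alpha>) / 2)" "0 < (\<beta> - \<alpha>) / 2" "(\<beta> - \<alpha>) / 2 < 1"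
      "2 / (2 - (\<beta> - \<alpha>)) = 1 / (1 - (\<beta> - \<alpha>) / 2)"
      using 1 assms(2,3) by (auto simp: field_simps)
    from block_spin_limits[OF assms(4,5) _ this] show ?thesis using 1 by simp
  next
    case 2
    have "\<beta> + -1 * \<alpha> = 2" "\<beta> - -1 * \<alpha> = 2 * ((\<beta> + \<alpha>) / 2)" "0 < (\<beta> + \<alpha>) / 2" "(\<beta> + \<alpha>) / 2 < 1"
      "- 1 / \<alpha> = 1 / (1 - (\<beta> + \<alpha>) / 2)"
      using 2 assms(2,3) by (auto simp: field_simps)
    from block_spin_limits[OF assms(4,5) _ this] show ?thesis using 2 by simp
  qed simp
qed

end
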